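(* Let $\Omega$ be a symmetric slice domain in $\mathbb{H}$ and let $F:\Omega\to M_n(\mathbb{H})$ be regular. If there exist $I\in\mathbb{S}$ and $q_0\in\Omega_I$ such that $\Vert F(q)\Vert\le\Vert F(q_0)\Vert$ for all $q\in\Omega$, then there exist constant $n\times n$ quaternionic unitary matrices $U$ and $V$ and a regular matrix-valued function $G:\Omega\to M_{n-1}(\mathbb{H})$ such that $$F(q)=U\begin{bmatrix}\Vert F(q_0)\Vert & 0\\ 0 & G(q)\end{bmatrix}V\quad\text{for all }q\in\Omega.$$
   Context: $\mathbb{H}$ denotes the real quaternions; $\mathbb{S}=\{q\in\mathbb{H}:q^2=-1\}$; for $I\in\mathbb{S}$, $L_I=\mathbb{R}+\mathbb{R}I$ and $\Omega_I=\Omega\cap L_I$. A domain $\Omega$ is a slice domain if it meets the real axis and each $\Omega_I$ is a domain in $L_I$; it is symmetric (axially symmetric) if whenever $x+yI\in\Omega$ ($x,y\in\mathbb{R}$, $I\in\mathbb{S}$) the whole sphere $x+y\mathbb{S}$ lies in $\Omega$. A function $f:\Omega\to\mathbb{H}$ is (left) regular if for each $I\in\mathbb{S}$, $\frac12(\partial_x+I\partial_y)f(x+yI)=0$ on $\Omega_I$; a matrix-valued function is regular if each entry is. $\Vert A\Vert$ denotes the operator norm of $A\in M_n(\mathbb{H})$ with respect to the Euclidean norm $\Vert x\Vert_2=(x^*x)^{1/2}$ on $\mathbb{H}^n$. A matrix $U\in M_n(\mathbb{H})$ is unitary if $U^*U=UU^*=I_n$. *)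

theory Defs
  imports "HOL-Analysis.Analysis"
begin

codatatype quat = Quat (Re: real) (Im1: real) (Im2: real) (Im3: real)

lemma quat_eqI [intro?]:
  "Re x = Re y \<Longrightarrow> Im1 x = Im1 y \<Longrightarrow> Im2 x = Im2 y \<Longrightarrow> Im3 x = Im3 y \<Longrightarrow> x = y"
  by (rule quat.expand) simp

lemma quat_eq_iff: "x = y \<longleftrightarrow> Re x = Re y \<and> Im1 x = Im1 y \<and> Im2 x = Im2 y \<and> Im3 x = Im3 y"
  by (auto intro: quat.expand)

instantiation quat :: ab_group_add
begin
primcorec zero_quat where "Re 0 = 0" | "Im1 0 = 0" | "Im2 0 = 0" | "Im3 0 = 0"
primcorec plus_quat where
  "Re (x + y) = Re x + Re y" | "Im1 (x + y) = Im1 x + Im1 y"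
| "Im2 (x + y) = Im2 x + Im2 y" | "Im3 (x + y) = Im3 x + Im3 y"
primcorec uminus_quat where
  "Re (- x) = - Re x" | "Im1 (- x) = - Im1 x" | "Im2 (- x) = - Im2 x" | "Im3 (- x) = - Im3 x"
primcorec minus_quat where
  "Re (x - y) = Re x - Re y" | "Im1 (x - y) = Im1 x - Im1 y"
| "Im2 (x - y) = Im2 x - Im2 y" | "Im3 (x - y) = Im3 x - Im3 y"
instance by standard (simp_all add: quat_eq_iff)
end

instantiation quat :: ring_1
begin
primcorec one_quat where "Re 1 = 1" | "Im1 1 = 0" | "Im2 1 = 0" | "Im3 1 = 0"
text \<open>Hamilton product, with basis 1, i, j, k and i^2 = j^2 = k^2 = ijk = -1.\<close>
primcorec times_quat where
  "Re (x * y) = Re x * Re y - Im1 x * Im1 y - Im2 x * Im2 y - Im3 x * Im3 y"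
| "Im1 (x * y) = Re x * Im1 y + Im1 x * Re y + Im2 x * Im3 y - Im3 x * Im2 y"
| "Im2 (x * y) = Re x * Im2 y - Im1 x * Im3 y + Im2 x * Re y + Im3 x * Im1 y"
| "Im3 (x * y) = Re x * Im3 y + Im1 x * Im2 y - Im2 x * Im1 y + Im3 x * Re y"
instance by standard (simp_all add: quat_eq_iff algebra_simps)
end

instantiation quat :: real_vector
begin
primcorec scaleR_quat where
  "Re (scaleR r x) = r * Re x" | "Im1 (scaleR r x) = r * Im1 x"
| "Im2 (scaleR r x) = r * Im2 x" | "Im3 (scaleR r x) = r * Im3 x"
instance by standard (simp_all add: quat_eq_iff algebra_simps)
end

instantiation quat :: real_inner
begin
definition inner_quat :: "quat \<Rightarrow> quat \<Rightarrow> real" where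
  "inner x y = Re x * Re y + Im1 x * Im1 y + Im2 x * Im2 y + Im3 x * Im3 y"
definition norm_quat :: "quat \<Rightarrow> real" where
  "norm x = sqrt ((Re x)\<^sup>2 + (Im1 x)\<^sup>2 + (Im2 x)\<^sup>2 + (Im3 x)\<^sup>2)"
definition sgn_quat :: "quat \<Rightarrow> quat" where "sgn_quat x = x /\<^sub>R norm x"
definition dist_quat :: "quat \<Rightarrow> quat \<Rightarrow> real" where "dist_quat x y = norm (x - y)"
definition uniformity_quat :: "(quat \<times> quat) filter" where
  "uniformity_quat = (INF e\<in>{0 <..}. principal {(x, y). dist x y < e})"
definition open_quat :: "quat set \<Rightarrow> bool" where
  "open_quat U \<longleftrightarrow> (\<forall>x\<in>U. \<forall>\<^sub>F (x', y) in uniformity. x' = x \<longrightarrow> y \<in> U)"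
instance
proof
  fix x y z :: quat and r :: real
  show "inner x y = inner y x" by (simp add: inner_quat_def mult.commute)
  show "inner (x + y) z = inner x z + inner y z" by (simp add: inner_quat_def algebra_simps)
  show "inner (scaleR r x) y = r * inner x y" by (simp add: inner_quat_def algebra_simps)
  show "0 \<le> inner x x" by (simp add: inner_quat_def)
  show "inner x x = 0 \<longleftrightarrow> x = 0"
    by (simp add: inner_quat_def quat_eq_iff add_nonneg_eq_0_iff)
  show "norm x = sqrt (inner x x)" by (simp add: norm_quat_def inner_quat_def power2_eq_square)
qed (simp_all add: sgn_quat_def dist_quat_def uniformity_quat_def open_quat_def)
end

primcorec cnj :: "quat \<Rightarrow> quat" where
  "Re (cnj x) = Re x" | "Im1 (cnj x) = - Im1 x" | "Im2 (cnj x) = - Im2 x" | "Im3 (cnj x) = - Im3 x"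

definition qreal :: "real \<Rightarrow> quat" where "qreal r = Quat r 0 0 0"

definition unit_sphere :: "quat set" where "unit_sphere = {q. q * q = - 1}"

definition slice :: "quat set \<Rightarrow> quat \<Rightarrow> quat set" where
  "slice \<Omega> I = {q \<in> \<Omega>. \<exists>x y. q = qreal x + qreal y * I}"

definition symmetric_set :: "quat set \<Rightarrow> bool" where
  "symmetric_set \<Omega> \<longleftrightarrow>
     (\<forall>x y I. I \<in> unit_sphere \<longrightarrow> qreal x + qreal y * I \<in> \<Omega> \<longrightarrow>
        (\<forall>J\<in>unit_sphere. qreal x + qreal y * J \<in> \<Omega>))"

text \<open>Slice domain: a domain (open connected set) meeting the real axis such that each
  Omega_I is a domain in L_I (open and connected, with L_I identified with R^2 via (x,y) \<mapsto> x+yI).\<close>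
definition slice_domain :: "quat set \<Rightarrow> bool" where
  "slice_domain \<Omega> \<longleftrightarrow> open \<Omega> \<and> connected \<Omega> \<and> (\<exists>x. qreal x \<in> \<Omega>) \<and>
     (\<forall>I\<in>unit_sphere.
        open {p :: real \<times> real. qreal (fst p) + qreal (snd p) * I \<in> \<Omega>} \<and>
        connected {p :: real \<times> real. qreal (fst p) + qreal (snd p) * I \<in> \<Omega>})"

definition regular :: "quat set \<Rightarrow> (quat \<Rightarrow> quat) \<Rightarrow> bool" where
  "regular \<Omega> f \<longleftrightarrow>
     (\<forall>I\<in>unit_sphere. \<forall>x y. qreal x + qreal y * I \<in> \<Omega> \<longrightarrow>
        (\<exists>D. ((\<lambda>(s, t). f (qreal s + qreal t * I)) has_derivative D) (at (x, y)) \<and>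
             scaleR (1/2) (D (1, 0) + I * D (0, 1)) = 0))"

text \<open>An n x n matrix is represented as a function  nat \<Rightarrow> nat \<Rightarrow> quat; only the entries with
  indices i, j < n are relevant. Vectors in H^n are functions nat \<Rightarrow> quat (entries i < n).\<close>

definition mat_mult :: "nat \<Rightarrow> (nat \<Rightarrow> nat \<Rightarrow> quat) \<Rightarrow> (nat \<Rightarrow> nat \<Rightarrow> quat) \<Rightarrow> nat \<Rightarrow> nat \<Rightarrow> quat" where
  "mat_mult n A B = (\<lambda>i j. \<Sum>k<n. A i k * B k j)"

definition mat_vec :: "nat \<Rightarrow> (nat \<Rightarrow> nat \<Rightarrow> quat) \<Rightarrow> (nat \<Rightarrow> quat) \<Rightarrow> nat \<Rightarrow> quat" where
  "mat_vec n A x = (\<lambda>i. \<Sum>k<n. A i k * x k)"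

definition mat_adj :: "(nat \<Rightarrow> nat \<Rightarrow> quat) \<Rightarrow> nat \<Rightarrow> nat \<Rightarrow> quat" where
  "mat_adj A = (\<lambda>i j. cnj (A j i))"

definition mat_id :: "nat \<Rightarrow> nat \<Rightarrow> quat" where
  "mat_id = (\<lambda>i j. if i = j then 1 else 0)"

definition mat_eq :: "nat \<Rightarrow> (nat \<Rightarrow> nat \<Rightarrow> quat) \<Rightarrow> (nat \<Rightarrow> nat \<Rightarrow> quat) \<Rightarrow> bool" where
  "mat_eq n A B \<longleftrightarrow> (\<forall>i<n. \<forall>j<n. A i j = B i j)"

definition unitary :: "nat \<Rightarrow> (nat \<Rightarrow> nat \<Rightarrow> quat) \<Rightarrow> bool" where
  "unitary n U \<longleftrightarrow> mat_eq n (mat_mult n (mat_adj U) U) mat_id \<and> mat_eq n (mat_mult n U (mat_adj U)) mat_id"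

definition vec_norm :: "nat \<Rightarrow> (nat \<Rightarrow> quat) \<Rightarrow> real" where
  "vec_norm n x = sqrt (\<Sum>i<n. (norm (x i))\<^sup>2)"

definition op_norm :: "nat \<Rightarrow> (nat \<Rightarrow> nat \<Rightarrow> quat) \<Rightarrow> real" where
  "op_norm n A = (SUP x\<in>{x. vec_norm n x \<le> 1}. vec_norm n (mat_vec n A x))"

definition mat_regular :: "nat \<Rightarrow> quat set \<Rightarrow> (quat \<Rightarrow> nat \<Rightarrow> nat \<Rightarrow> quat) \<Rightarrow> bool" where
  "mat_regular n \<Omega> F \<longleftrightarrow> (\<forall>i<n. \<forall>j<n. regular \<Omega> (\<lambda>q. F q i j))"

definition block_diag :: "quat \<Rightarrow> (nat \<Rightarrow> nat \<Rightarrow> quat) \<Rightarrow> nat \<Rightarrow> nat \<Rightarrow> quat" where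
  "block_diag c G = (\<lambda>i j. if i = 0 \<and> j = 0 then c
                           else if i = 0 \<or> j = 0 then 0 else G (i - 1) (j - 1))"

end

theory Submission
  imports Defs "HOL-Complex_Analysis.Complex_Analysis"
begin

text \<open>Let s = ||F(q0)|| > 0 and let v be a unit vector with ||F(q0) v|| = s. On the slice through q0
  the regular vector function F v solves a Cauchy--Riemann equation and the real part of
  <F v, F(q0) v> is maximal at q0, so the maximum principle gives F v = s u on that slice and the
  identity principle on all of Omega. As ||F(q)|| <= s, also u* F(q) = s v*.

  Left multiplication by a non-real constant does not preserve regularity, so the unitary U with
  first column u (up to a phase) is a product of a real Householder reflection and a reflection
  along a vector w for which w* F is constant. Such a w exists: writing cnj u = sum e_m t_m with
  real vectors t_m, the representation formula shows that every t_m^T F is constant. Then every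
  entry of U* F V is regular and U* F V has the required block form.\<close>

section \<open>Quaternions as a normed division algebra\<close>

instantiation quat :: inverse
begin
definition inverse_quat :: "quat \<Rightarrow> quat" where
  "inverse_quat x = scaleR (inverse ((norm x)\<^sup>2)) (cnj x)"
definition divide_quat :: "quat \<Rightarrow> quat \<Rightarrow> quat" where
  "divide_quat x y = x * inverse y"
instance ..
end

lemma norm_quat_sq: "(norm x)\<^sup>2 = (quat.Re x)\<^sup>2 + (Im1 x)\<^sup>2 + (Im2 x)\<^sup>2 + (Im3 x)\<^sup>2"
  by (simp add: norm_quat_def)

lemma cnj_mult_self_eq_scaleR: "cnj x * x = scaleR ((norm x)\<^sup>2) 1" "x * cnj x = scaleR ((norm x)\<^sup>2) 1"
  unfolding norm_quat_sq by (simp_all add: quat_eq_iff power2_eq_square algebra_simps)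

instance quat :: real_normed_div_algebra
proof
  show scaleR_mult: "scaleR a x * y = scaleR a (x * y)" "x * scaleR a y = scaleR a (x * y)"
    for a and x y :: quat
    by (simp_all add: quat_eq_iff algebra_simps)
  show "inverse x * x = 1" "x * inverse x = 1" if "x \<noteq> 0" for x :: quat
    using that by (simp_all add: inverse_quat_def scaleR_mult cnj_mult_self_eq_scaleR)
  show "x / y = x * inverse y" for x y :: quat
    by (simp add: divide_quat_def)
  show "inverse (0::quat) = 0"
    by (simp add: inverse_quat_def quat_eq_iff)
  show "norm (x * y) = norm x * norm y" for x y :: quat
    unfolding norm_quat_def real_sqrt_mult[symmetric]
    by (rule arg_cong[where f=sqrt]) (simp add: power2_eq_square algebra_simps)
qed

instantiation quat :: euclidean_space
begin
definition Basis_quat :: "quat set" where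
  "Basis_quat = {Quat 1 0 0 0, Quat 0 1 0 0, Quat 0 0 1 0, Quat 0 0 0 1}"
instance
proof
  show "(Basis :: quat set) \<noteq> {}" "finite (Basis :: quat set)"
    by (simp_all add: Basis_quat_def)
  fix u v x :: quat
  show "inner u v = (if u = v then 1 else 0)" if "u \<in> Basis" "v \<in> Basis"
    using that unfolding Basis_quat_def by (elim insertE emptyE) (simp_all add: inner_quat_def)
  show "(\<forall>u\<in>Basis. inner x u = 0) = (x = 0)"
    unfolding Basis_quat_def by (simp add: inner_quat_def) (auto intro: quat_eqI)
qed
end

lemma qreal_eq_of_real: "qreal x = of_real x"
  by (simp add: qreal_def of_real_def quat_eq_iff)

lemma cnj_cnj [simp]: "cnj (cnj x) = x" by (simp add: quat_eq_iff)
lemma cnj_zero [simp]: "cnj 0 = 0" by (simp add: quat_eq_iff)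
lemma cnj_one [simp]: "cnj 1 = 1" by (simp add: quat_eq_iff)
lemma cnj_mult: "cnj (x * y) = cnj y * cnj x" by (simp add: quat_eq_iff)
lemma cnj_add [simp]: "cnj (x + y) = cnj x + cnj y" by (simp add: quat_eq_iff)
lemma cnj_diff [simp]: "cnj (x - y) = cnj x - cnj y" by (simp add: quat_eq_iff)
lemma cnj_of_real [simp]: "cnj (of_real r) = of_real r" by (simp add: quat_eq_iff of_real_def)
lemma cnj_scaleR [simp]: "cnj (scaleR r x) = scaleR r (cnj x)" by (simp add: quat_eq_iff)
lemma cnj_eq_0_iff [simp]: "cnj x = 0 \<longleftrightarrow> x = 0" by (auto simp: quat_eq_iff)
lemma norm_cnj [simp]: "norm (cnj x) = norm x" by (simp add: norm_quat_def)

lemma cnj_sum: "cnj (sum f A) = (\<Sum>i\<in>A. cnj (f i))"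
  by (induction A rule: infinite_finite_induct) auto

lemma mult_cnj_self: "x * cnj x = of_real ((norm x)\<^sup>2)"
  by (simp add: cnj_mult_self_eq_scaleR of_real_def)

lemma cnj_mult_self: "cnj x * x = of_real ((norm x)\<^sup>2)"
  by (simp add: cnj_mult_self_eq_scaleR of_real_def)

lemma Re_of_real [simp]: "quat.Re (of_real r) = r"
  by (simp add: of_real_def)

lemma Re_sum: "quat.Re (sum f A) = (\<Sum>i\<in>A. quat.Re (f i))"
  by (induction A rule: infinite_finite_induct) auto

lemma Re_mult_cnj: "quat.Re (x * cnj y) = inner x y"
  by (simp add: inner_quat_def)

lemma Re_cnj_mult: "quat.Re (cnj x * y) = inner x y"
  by (simp add: inner_quat_def)

lemma of_real_mult_commute_quat: "of_real r * (x::quat) = x * of_real r"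
  by (simp add: of_real_def)

section \<open>Imaginary units and slices\<close>

lemma unit_sphere_components:
  assumes "J \<in> unit_sphere"
  shows "quat.Re J = 0" "(Im1 J)\<^sup>2 + (Im2 J)\<^sup>2 + (Im3 J)\<^sup>2 = 1"
proof -
  have e: "quat.Re J * quat.Re J - Im1 J * Im1 J - Im2 J * Im2 J - Im3 J * Im3 J = -1"
     "quat.Re J * Im1 J = 0" "quat.Re J * Im2 J = 0" "quat.Re J * Im3 J = 0"
    using assms by (auto simp: unit_sphere_def quat_eq_iff algebra_simps)
  show r: "quat.Re J = 0"
  proof (rule ccontr)
    assume "quat.Re J \<noteq> 0"
    then have "quat.Re J * quat.Re J = -1" using e by simp
    moreover have "quat.Re J * quat.Re J \<ge> 0" by simp
    ultimately show False by linarith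
  qed
  show "(Im1 J)\<^sup>2 + (Im2 J)\<^sup>2 + (Im3 J)\<^sup>2 = 1" using e r by (simp add: power2_eq_square)
qed

lemma unit_sphere_mult_self: "J \<in> unit_sphere \<Longrightarrow> J * (J * x) = - x"
  by (simp add: unit_sphere_def mult.assoc[symmetric])

lemma unit_sphere_minus: "J \<in> unit_sphere \<Longrightarrow> - J \<in> unit_sphere"
  by (simp add: unit_sphere_def)

definition slice_emb :: "quat \<Rightarrow> real \<times> real \<Rightarrow> quat" where
  "slice_emb J p = of_real (fst p) + of_real (snd p) * J"

definition slice_dom :: "quat set \<Rightarrow> quat \<Rightarrow> (real \<times> real) set" where
  "slice_dom \<Omega> J = {p. slice_emb J p \<in> \<Omega>}"

lemma slice_emb_real: "slice_emb J (x, 0) = of_real x"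
  by (simp add: slice_emb_def)

lemma slice_dom_symmetric:
  assumes "symmetric_set \<Omega>" "I \<in> unit_sphere" "J \<in> unit_sphere"
  shows "slice_dom \<Omega> J = slice_dom \<Omega> I"
  using assms unfolding symmetric_set_def slice_dom_def slice_emb_def qreal_eq_of_real by blast

lemma slice_domain_slice_dom:
  assumes "slice_domain \<Omega>" "J \<in> unit_sphere"
  shows "open (slice_dom \<Omega> J)" "connected (slice_dom \<Omega> J)" "\<exists>x. (x, 0) \<in> slice_dom \<Omega> J"
proof -
  have e: "{p. qreal (fst p) + qreal (snd p) * J \<in> \<Omega>} = slice_dom \<Omega> J"
    by (simp add: slice_dom_def slice_emb_def qreal_eq_of_real)
  with assms show "open (slice_dom \<Omega> J)" "connected (slice_dom \<Omega> J)"
    unfolding slice_domain_def by auto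
  from assms(1) obtain x where "qreal x \<in> \<Omega>" unfolding slice_domain_def by blast
  then have "(x, 0) \<in> slice_dom \<Omega> J" by (simp add: slice_dom_def slice_emb_def qreal_eq_of_real)
  then show "\<exists>x. (x, 0) \<in> slice_dom \<Omega> J" ..
qed

lemma slice_memE:
  assumes "q \<in> slice \<Omega> I" obtains p where "q = slice_emb I p" "p \<in> slice_dom \<Omega> I"
  using assms by (auto simp: slice_def slice_dom_def slice_emb_def qreal_eq_of_real)

text \<open>Witness: q = Re q + |v| (v / |v|), where v is the imaginary part of q.\<close>
lemma quat_in_some_slice:
  obtains J p where "J \<in> unit_sphere" "q = slice_emb J p"
proof (cases "q = of_real (quat.Re q)")
  case True
  have "Quat 0 1 0 0 \<in> unit_sphere" by (simp add: unit_sphere_def quat_eq_iff)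
  moreover from True have "q = slice_emb (Quat 0 1 0 0) (quat.Re q, 0)" by (simp add: slice_emb_real)
  ultimately show ?thesis using that by blast
next
  case False
  define v where "v = q - of_real (quat.Re q)"
  have v0: "norm v \<noteq> 0" using False by (simp add: v_def)
  define J where "J = scaleR (1 / norm v) v"
  have "v * v = - of_real ((norm v)\<^sup>2)"
    unfolding norm_quat_sq by (simp add: v_def quat_eq_iff power2_eq_square of_real_def)
  then have "J * J = - of_real ((1 / norm v) * (1 / norm v) * (norm v)\<^sup>2)"
    by (simp add: J_def of_real_def)
  also have "\<dots> = - 1" using v0 by (simp add: power2_eq_square)
  finally have "J \<in> unit_sphere" by (simp add: unit_sphere_def)
  moreover have "q = slice_emb J (quat.Re q, norm v)"
    using v0 by (simp add: slice_emb_def J_def v_def scaleR_conv_of_real[symmetric])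
  ultimately show ?thesis using that by blast
qed

section \<open>The Cauchy--Riemann equation on a slice\<close>

definition cauchy_riemann_on :: "quat \<Rightarrow> (real \<times> real) set \<Rightarrow> (real \<times> real \<Rightarrow> quat) \<Rightarrow> bool" where
  "cauchy_riemann_on J U h \<longleftrightarrow>
     (\<forall>p\<in>U. \<exists>D. (h has_derivative D) (at p) \<and> D (1,0) + J * D (0,1) = 0)"

lemma regular_iff_cauchy_riemann:
  "regular \<Omega> f \<longleftrightarrow> (\<forall>J\<in>unit_sphere. cauchy_riemann_on J (slice_dom \<Omega> J) (\<lambda>p. f (slice_emb J p)))"
proof -
  have "(\<lambda>(s, t). f (qreal s + qreal t * J)) = (\<lambda>p. f (slice_emb J p))" for J
    by (auto simp: slice_emb_def qreal_eq_of_real)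
  then show ?thesis
    unfolding regular_def cauchy_riemann_on_def slice_dom_def
    by (auto simp: slice_emb_def qreal_eq_of_real)
qed

lemma cauchy_riemann_const: "cauchy_riemann_on J U (\<lambda>p. c)"
  unfolding cauchy_riemann_on_def by (auto intro!: exI[of _ "\<lambda>_. 0"])

lemma cauchy_riemann_add:
  assumes "cauchy_riemann_on J U f" "cauchy_riemann_on J U g"
  shows "cauchy_riemann_on J U (\<lambda>p. f p + g p)"
  unfolding cauchy_riemann_on_def
proof
  fix p assume "p \<in> U"
  with assms obtain D E where
    D: "(f has_derivative D) (at p)" "D (1,0) + J * D (0,1) = 0" and
    E: "(g has_derivative E) (at p)" "E (1,0) + J * E (0,1) = 0"
    unfolding cauchy_riemann_on_def by meson
  have "((\<lambda>p. f p + g p) has_derivative (\<lambda>x. D x + E x)) (at p)"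
    by (rule has_derivative_add[OF D(1) E(1)])
  moreover have "(D (1,0) + E (1,0)) + J * (D (0,1) + E (0,1)) = 0"
    using D(2) E(2) by (simp add: algebra_simps)
  ultimately show "\<exists>D. ((\<lambda>p. f p + g p) has_derivative D) (at p) \<and> D (1,0) + J * D (0,1) = 0"
    by blast
qed

lemma cauchy_riemann_mult_right:
  assumes "cauchy_riemann_on J U h" shows "cauchy_riemann_on J U (\<lambda>p. h p * w)"
  unfolding cauchy_riemann_on_def
proof
  fix p assume "p \<in> U"
  with assms obtain D where D: "(h has_derivative D) (at p)" "D (1,0) + J * D (0,1) = 0"
    by (auto simp: cauchy_riemann_on_def)
  have "((\<lambda>p. h p * w) has_derivative (\<lambda>x. D x * w)) (at p)"
    by (rule has_derivative_mult_left[OF D(1)])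
  moreover have "D (1,0) * w + J * (D (0,1) * w) = 0"
    using D(2) by (metis distrib_right mult.assoc mult_zero_left)
  ultimately show "\<exists>D. ((\<lambda>p. h p * w) has_derivative D) (at p) \<and> D (1,0) + J * D (0,1) = 0"
    by blast
qed

lemma cauchy_riemann_diff:
  assumes "cauchy_riemann_on J U f" "cauchy_riemann_on J U g"
  shows "cauchy_riemann_on J U (\<lambda>p. f p - g p)"
  using cauchy_riemann_add[OF assms(1) cauchy_riemann_mult_right[OF assms(2), of "-1"]] by simp

lemma cauchy_riemann_sum:
  assumes "\<And>i. i \<in> A \<Longrightarrow> cauchy_riemann_on J U (f i)"
  shows "cauchy_riemann_on J U (\<lambda>p. \<Sum>i\<in>A. f i p)"
  using assms
  by (induction A rule: infinite_finite_induct) (simp_all add: cauchy_riemann_const cauchy_riemann_add)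

lemma regular_const: "regular \<Omega> (\<lambda>q. c)"
  unfolding regular_iff_cauchy_riemann by (simp add: cauchy_riemann_const)

lemma regular_diff: "regular \<Omega> f \<Longrightarrow> regular \<Omega> g \<Longrightarrow> regular \<Omega> (\<lambda>q. f q - g q)"
  unfolding regular_iff_cauchy_riemann by (simp add: cauchy_riemann_diff)

lemma regular_mult_right: "regular \<Omega> f \<Longrightarrow> regular \<Omega> (\<lambda>q. f q * w)"
  unfolding regular_iff_cauchy_riemann by (simp add: cauchy_riemann_mult_right)

lemma regular_of_real_mult: "regular \<Omega> f \<Longrightarrow> regular \<Omega> (\<lambda>q. of_real r * f q)"
  unfolding of_real_mult_commute_quat by (rule regular_mult_right)

lemma regular_sum: "(\<And>i. i \<in> A \<Longrightarrow> regular \<Omega> (f i)) \<Longrightarrow> regular \<Omega> (\<lambda>q. \<Sum>i\<in>A. f i q)"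
  unfolding regular_iff_cauchy_riemann by (simp add: cauchy_riemann_sum)

lemma regular_cong:
  assumes "slice_domain \<Omega>" "regular \<Omega> f" "\<And>q. q \<in> \<Omega> \<Longrightarrow> f q = g q"
  shows "regular \<Omega> g"
  unfolding regular_iff_cauchy_riemann cauchy_riemann_on_def
proof (intro ballI)
  fix J p assume J: "J \<in> unit_sphere" and p: "p \<in> slice_dom \<Omega> J"
  obtain D where D: "((\<lambda>p. f (slice_emb J p)) has_derivative D) (at p)" "D (1,0) + J * D (0,1) = 0"
    using assms(2) J p unfolding regular_iff_cauchy_riemann cauchy_riemann_on_def by blast
  have "((\<lambda>p. g (slice_emb J p)) has_derivative D) (at p)"
    using slice_domain_slice_dom(1)[OF assms(1) J] p
    by (rule has_derivative_transform_within_open[OF D(1)]) (simp add: assms(3) slice_dom_def)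
  with D(2) show "\<exists>D. ((\<lambda>p. g (slice_emb J p)) has_derivative D) (at p) \<and> D (1,0) + J * D (0,1) = 0"
    by blast
qed

text \<open>Left multiplication by J becomes multiplication by i, so solutions of the Cauchy--Riemann
  equation for J become holomorphic functions.\<close>
definition to_complex :: "quat \<Rightarrow> quat \<Rightarrow> complex" where
  "to_complex J q = Complex (quat.Re q) (inner q J)"

lemma bounded_linear_to_complex: "bounded_linear (to_complex J)"
proof -
  have "to_complex J = (\<lambda>q. of_real (inner q 1) + \<i> * of_real (inner q J))"
    by (rule ext) (simp add: to_complex_def complex_eq_iff inner_quat_def)
  then show ?thesis
    by (simp only:) (intro bounded_linear_add bounded_linear_compose[OF bounded_linear_of_real]
        bounded_linear_compose[OF bounded_linear_mult_right] bounded_linear_inner_left)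
qed

lemma to_complex_scaleR: "to_complex J (a *\<^sub>R x) = of_real a * to_complex J x"
  by (simp add: to_complex_def complex_eq_iff)

lemma to_complex_add: "to_complex J (x + y) = to_complex J x + to_complex J y"
  by (simp add: to_complex_def complex_eq_iff inner_add_left)

lemma to_complex_minus: "to_complex J (- x) = - to_complex J x"
  by (simp add: to_complex_def complex_eq_iff)

lemma to_complex_unit_mult:
  assumes "J \<in> unit_sphere" shows "to_complex J (J * q) = \<i> * to_complex J q"
proof -
  note J = unit_sphere_components[OF assms]
  have "inner (J * q) J = quat.Re q * ((Im1 J)\<^sup>2 + (Im2 J)\<^sup>2 + (Im3 J)\<^sup>2)"
    using J(1) by (simp add: inner_quat_def algebra_simps power2_eq_square)
  with J show ?thesis by (simp add: to_complex_def complex_eq_iff inner_quat_def)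
qed

lemma linear_pair_decomp:
  assumes "bounded_linear D"
  shows "D (a, b) = a *\<^sub>R D (1,0) + b *\<^sub>R D (0,1)"
proof -
  interpret linear D using assms by (rule bounded_linear.linear)
  have "(a, b) = a *\<^sub>R (1::real, 0::real) + b *\<^sub>R (0, 1)" by simp
  then show ?thesis by (metis add scale)
qed

definition complex_set :: "(real \<times> real) set \<Rightarrow> complex set" where
  "complex_set U = {z. (Complex.Re z, Im z) \<in> U}"

lemma complex_set_iff [simp]: "Complex x y \<in> complex_set U \<longleftrightarrow> (x, y) \<in> U"
  by (simp add: complex_set_def)

lemma open_complex_set: "open U \<Longrightarrow> open (complex_set U)"
  unfolding complex_set_def
  using continuous_open_vimage[of U "\<lambda>z::complex. (Complex.Re z, Im z)"]
    linear_continuous_at[OF bounded_linear_Pair[OF Complex.bounded_linear_Re bounded_linear_Im]]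
  by (simp add: vimage_def)

lemma connected_complex_set: "connected U \<Longrightarrow> connected (complex_set U)"
proof -
  assume "connected U"
  moreover have "complex_set U = (\<lambda>p. Complex (fst p) (snd p)) ` U"
    unfolding complex_set_def by (force simp: image_iff)
  moreover have "continuous_on U (\<lambda>p. Complex (fst p) (snd p))"
  proof -
    have "(\<lambda>p. Complex (fst p) (snd p)) = (\<lambda>p. of_real (fst p) + \<i> * of_real (snd p))"
      by (rule ext) (simp add: complex_eq_iff)
    then show ?thesis by (simp add: continuous_intros)
  qed
  ultimately show ?thesis using connected_continuous_image by metis
qed

lemma complex_set_real_islimpt:
  assumes "open U" "(x, 0) \<in> U"
  shows "Complex x 0 islimpt {z \<in> complex_set U. Im z = 0}"
proof -
  have "Complex x 0 \<in> complex_set U" using assms(2) by simp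
  then obtain r where r: "r > 0" "ball (Complex x 0) r \<subseteq> complex_set U"
    using open_complex_set[OF assms(1)] open_contains_ball by blast
  show ?thesis
    unfolding islimpt_approachable
  proof (intro allI impI)
    fix e :: real assume e: "e > 0"
    define z where "z = Complex (x + min e r / 2) 0"
    have "z - Complex x 0 = of_real (min e r / 2)" by (simp add: z_def complex_eq_iff)
    then have d: "dist z (Complex x 0) = min e r / 2"
      using e r unfolding dist_norm by (simp only: norm_of_real)
    then have "z \<in> complex_set U" using e r by (intro subsetD[OF r(2)]) (simp add: dist_commute)
    with d e r show "\<exists>z\<in>{z \<in> complex_set U. Im z = 0}. z \<noteq> Complex x 0 \<and> dist z (Complex x 0) < e"
      by (intro bexI[of _ z]) (auto simp: z_def)
  qed
qed

lemma cauchy_riemann_holomorphic: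
  assumes J: "J \<in> unit_sphere" and h: "cauchy_riemann_on J U h"
  shows "(\<lambda>z. to_complex J (h (Complex.Re z, Im z))) holomorphic_on complex_set U"
  unfolding holomorphic_on_def
proof
  fix z assume "z \<in> complex_set U"
  then obtain D where D: "(h has_derivative D) (at (Complex.Re z, Im z))" and
    cr: "D (1,0) + J * D (0,1) = 0"
    using h by (auto simp: cauchy_riemann_on_def complex_set_def)
  have lin: "bounded_linear D" using D by (rule has_derivative_bounded_linear)
  have "((\<lambda>z. (Complex.Re z, Im z)) has_derivative (\<lambda>w. (Complex.Re w, Im w))) (at z)"
    by (intro bounded_linear_imp_has_derivative bounded_linear_Pair
        Complex.bounded_linear_Re bounded_linear_Im)
  from bounded_linear.has_derivative[OF bounded_linear_to_complex has_derivative_compose[OF this D]]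
  have cd: "((\<lambda>z. to_complex J (h (Complex.Re z, Im z))) has_derivative
             (\<lambda>w. to_complex J (D (Complex.Re w, Im w)))) (at z)" .
  define c where "c = to_complex J (D (1,0))"
  have "c = - (\<i> * to_complex J (D (0,1)))"
    using cr unfolding c_def eq_neg_iff_add_eq_0[symmetric]
    by (simp add: to_complex_minus to_complex_unit_mult[OF J, symmetric])
  then have c01: "to_complex J (D (0,1)) = \<i> * c" by (simp add: algebra_simps)
  have "to_complex J (D (Complex.Re w, Im w)) = c * w" for w
  proof -
    have "to_complex J (D (Complex.Re w, Im w)) = of_real (Complex.Re w) * c + of_real (Im w) * (\<i> * c)"
      unfolding linear_pair_decomp[OF lin, of "Complex.Re w" "Im w"] to_complex_add to_complex_scaleR c01 c_def ..
    also have "\<dots> = c * w" by (simp add: complex_eq_iff algebra_simps)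
    finally show ?thesis .
  qed
  with cd have "((\<lambda>z. to_complex J (h (Complex.Re z, Im z))) has_field_derivative c) (at z)"
    by (simp add: has_field_derivative_def)
  then show "(\<lambda>z. to_complex J (h (Complex.Re z, Im z))) field_differentiable at z within complex_set U"
    unfolding field_differentiable_def by (metis has_field_derivative_at_within)
qed

text \<open>to_complex J sees only two real coordinates of h, so the identity principle is applied to h w
  for every constant w; then w = cnj (h p) gives |h p|^2 = 0.\<close>
lemma cauchy_riemann_eq_0:
  assumes J: "J \<in> unit_sphere" and U: "open U" "connected U" and h: "cauchy_riemann_on J U h"
    and x0: "(x0, 0) \<in> U" and real_0: "\<And>x. (x, 0) \<in> U \<Longrightarrow> h (x, 0) = 0" and p: "p \<in> U"
  shows "h p = 0"
proof -
  have "quat.Re (h p * w) = 0" for w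
  proof -
    have "to_complex J (h (Complex.Re (Complex (fst p) (snd p)), Im (Complex (fst p) (snd p))) * w) = 0"
    proof (rule analytic_continuation[OF cauchy_riemann_holomorphic[OF J cauchy_riemann_mult_right[OF h]]
          open_complex_set[OF U(1)] connected_complex_set[OF U(2)] _ _ complex_set_real_islimpt[OF U(1) x0]])
      show "Complex x0 0 \<in> complex_set U" "Complex (fst p) (snd p) \<in> complex_set U"
        using x0 p by simp_all
      fix z assume "z \<in> {z \<in> complex_set U. Im z = 0}"
      then have "(Complex.Re z, 0) \<in> U" "Im z = 0" by (auto simp: complex_set_def)
      then show "to_complex J (h (Complex.Re z, Im z) * w) = 0"
        using real_0 by (simp add: to_complex_def complex_eq_iff)
    qed auto
    then show ?thesis by (simp add: to_complex_def complex_eq_iff)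
  qed
  from this[of "cnj (h p)"] show ?thesis by (simp only: Re_mult_cnj inner_eq_zero_iff)
qed

text \<open>Apply the maximum modulus principle to exp (to_complex J h).\<close>
lemma cauchy_riemann_Re_max:
  assumes J: "J \<in> unit_sphere" and U: "open U" "connected U" and h: "cauchy_riemann_on J U h"
    and p0: "p0 \<in> U" and le: "\<And>p. p \<in> U \<Longrightarrow> quat.Re (h p) \<le> quat.Re (h p0)" and p: "p \<in> U"
  shows "quat.Re (h p) = quat.Re (h p0)"
proof -
  define f where "f = (\<lambda>z. exp (to_complex J (h (Complex.Re z, Im z))))"
  have norm_f: "norm (f z) = exp (quat.Re (h (Complex.Re z, Im z)))" for z
    by (simp add: f_def norm_exp_eq_Re to_complex_def)
  have "f holomorphic_on complex_set U"
    unfolding f_def using cauchy_riemann_holomorphic[OF J h] by (intro holomorphic_intros)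
  then have "f constant_on complex_set U"
  proof (rule maximum_modulus_principle[OF _ open_complex_set[OF U(1)] connected_complex_set[OF U(2)]
        open_complex_set[OF U(1)] order_refl])
    show "Complex (fst p0) (snd p0) \<in> complex_set U" using p0 by simp
    fix z assume "z \<in> complex_set U"
    then show "norm (f z) \<le> norm (f (Complex (fst p0) (snd p0)))"
      using le[of "(Complex.Re z, Im z)"] by (simp add: norm_f complex_set_def)
  qed
  then have "norm (f (Complex (fst p) (snd p))) = norm (f (Complex (fst p0) (snd p0)))"
    using p p0 by (auto simp: constant_on_def)
  then show ?thesis by (simp add: norm_f)
qed

section \<open>The representation formula\<close>

definition cauchy_riemann_pair ::
    "(real \<times> real) set \<Rightarrow> (real \<times> real \<Rightarrow> 'a::real_normed_vector) \<Rightarrow> (real \<times> real \<Rightarrow> 'a) \<Rightarrow> bool" where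
  "cauchy_riemann_pair U a b \<longleftrightarrow>
     (\<forall>p\<in>U. \<exists>Da Db. (a has_derivative Da) (at p) \<and> (b has_derivative Db) (at p) \<and>
        Da (1,0) = Db (0,1) \<and> Da (0,1) = - Db (1,0))"

lemma cauchy_riemann_pair_rotate:
  assumes "cauchy_riemann_pair U a b"
  shows "cauchy_riemann_pair U b (\<lambda>p. - a p)"
  unfolding cauchy_riemann_pair_def
proof
  fix p assume "p \<in> U"
  with assms obtain Da Db where D: "(a has_derivative Da) (at p)" "(b has_derivative Db) (at p)"
    "Da (1,0) = Db (0,1)" "Da (0,1) = - Db (1,0)"
    unfolding cauchy_riemann_pair_def by blast
  have "((\<lambda>p. - a p) has_derivative (\<lambda>x. - Da x)) (at p)" by (rule has_derivative_minus[OF D(1)])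
  with D(2-4) show "\<exists>Db Da. (b has_derivative Db) (at p) \<and> ((\<lambda>p. - a p) has_derivative Da) (at p) \<and>
      Db (1,0) = Da (0,1) \<and> Db (0,1) = - Da (1,0)"
    by (intro exI[of _ Db] exI[of _ "\<lambda>x. - Da x"]) simp
qed

lemma cauchy_riemann_pair_mult_left:
  fixes a b :: "real \<times> real \<Rightarrow> 'a::real_normed_algebra"
  assumes "cauchy_riemann_pair U a b"
  shows "cauchy_riemann_pair U (\<lambda>p. c * a p) (\<lambda>p. c * b p)"
  unfolding cauchy_riemann_pair_def
proof
  fix p assume "p \<in> U"
  with assms obtain Da Db where D: "(a has_derivative Da) (at p)" "(b has_derivative Db) (at p)"
    "Da (1,0) = Db (0,1)" "Da (0,1) = - Db (1,0)"
    unfolding cauchy_riemann_pair_def by blast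
  have "((\<lambda>p. c * a p) has_derivative (\<lambda>x. c * Da x)) (at p)"
    "((\<lambda>p. c * b p) has_derivative (\<lambda>x. c * Db x)) (at p)"
    by (rule has_derivative_mult_right[OF D(1)], rule has_derivative_mult_right[OF D(2)])
  with D(3,4) show "\<exists>Da Db. ((\<lambda>p. c * a p) has_derivative Da) (at p) \<and>
      ((\<lambda>p. c * b p) has_derivative Db) (at p) \<and> Da (1,0) = Db (0,1) \<and> Da (0,1) = - Db (1,0)"
    by (intro exI[of _ "\<lambda>x. c * Da x"] exI[of _ "\<lambda>x. c * Db x"]) simp
qed

lemma cauchy_riemann_pair_add:
  assumes "cauchy_riemann_pair U a b" "cauchy_riemann_pair U a' b'"
  shows "cauchy_riemann_pair U (\<lambda>p. a p + a' p) (\<lambda>p. b p + b' p)"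
  unfolding cauchy_riemann_pair_def
proof
  fix p assume p: "p \<in> U"
  obtain Da Db where D: "(a has_derivative Da) (at p)" "(b has_derivative Db) (at p)"
    "Da (1,0) = Db (0,1)" "Da (0,1) = - Db (1,0)"
    using assms(1) p unfolding cauchy_riemann_pair_def by blast
  obtain Ea Eb where E: "(a' has_derivative Ea) (at p)" "(b' has_derivative Eb) (at p)"
    "Ea (1,0) = Eb (0,1)" "Ea (0,1) = - Eb (1,0)"
    using assms(2) p unfolding cauchy_riemann_pair_def by blast
  have "((\<lambda>p. a p + a' p) has_derivative (\<lambda>x. Da x + Ea x)) (at p)"
    "((\<lambda>p. b p + b' p) has_derivative (\<lambda>x. Db x + Eb x)) (at p)"
    by (rule has_derivative_add[OF D(1) E(1)], rule has_derivative_add[OF D(2) E(2)])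
  with D(3,4) E(3,4) show "\<exists>Da Db. ((\<lambda>p. a p + a' p) has_derivative Da) (at p) \<and>
      ((\<lambda>p. b p + b' p) has_derivative Db) (at p) \<and> Da (1,0) = Db (0,1) \<and> Da (0,1) = - Db (1,0)"
    by (intro exI[of _ "\<lambda>x. Da x + Ea x"] exI[of _ "\<lambda>x. Db x + Eb x"]) simp
qed

lemma cauchy_riemann_pair_sum:
  assumes "\<And>i. i \<in> A \<Longrightarrow> cauchy_riemann_pair U (a i) (b i)"
  shows "cauchy_riemann_pair U (\<lambda>p. \<Sum>i\<in>A. a i p) (\<lambda>p. \<Sum>i\<in>A. b i p)"
  using assms
proof (induction A rule: infinite_finite_induct)
  case (insert i A)
  then show ?case by (simp add: cauchy_riemann_pair_add)
qed (auto simp: cauchy_riemann_pair_def intro!: exI[of _ "\<lambda>_. 0"])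

lemma cauchy_riemann_pair_const:
  assumes U: "open U" "connected U" and ab: "cauchy_riemann_pair U a b"
    and a: "\<And>p. p \<in> U \<Longrightarrow> a p = c" and p: "p \<in> U" "p' \<in> U"
  shows "b p = b p'"
proof (rule has_derivative_zero_unique_connected[OF U _ p])
  fix x assume x: "x \<in> U"
  with ab obtain Da Db where D: "(a has_derivative Da) (at x)" "(b has_derivative Db) (at x)"
    "Da (1,0) = Db (0,1)" "Da (0,1) = - Db (1,0)"
    unfolding cauchy_riemann_pair_def by blast
  have "((\<lambda>_. c) has_derivative Da) (at x)"
    using D(1) U(1) x by (rule has_derivative_transform_within_open) (simp add: a)
  then have "Da = (\<lambda>_. 0)" using has_derivative_unique[OF _ has_derivative_const] by blast
  then have "Db y = 0" for y
    using linear_pair_decomp[OF has_derivative_bounded_linear[OF D(2)], of "fst y" "snd y"] D(3,4)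
    by simp
  then have "Db = (\<lambda>_. 0)" by blast
  then show "(b has_derivative (\<lambda>_. 0)) (at x)" using D(2) by simp
qed

definition repr_alpha :: "quat \<Rightarrow> (quat \<Rightarrow> quat) \<Rightarrow> real \<times> real \<Rightarrow> quat" where
  "repr_alpha I f p = scaleR (1/2) (f (slice_emb I p) + f (slice_emb (-I) p))"

definition repr_beta :: "quat \<Rightarrow> (quat \<Rightarrow> quat) \<Rightarrow> real \<times> real \<Rightarrow> quat" where
  "repr_beta I f p = scaleR (-1/2) (I * (f (slice_emb I p) - f (slice_emb (-I) p)))"

lemma repr_alpha_real: "repr_alpha I f (x, 0) = f (of_real x)"
  by (simp add: repr_alpha_def slice_emb_real scaleR_2[symmetric])

lemma repr_beta_real: "repr_beta I f (x, 0) = 0"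
  by (simp add: repr_beta_def slice_emb_real)

lemma repr_cauchy_riemann_pair:
  assumes f: "regular \<Omega> f" and I: "I \<in> unit_sphere" and sym: "symmetric_set \<Omega>"
  shows "cauchy_riemann_pair (slice_dom \<Omega> I) (repr_alpha I f) (repr_beta I f)"
  unfolding cauchy_riemann_pair_def
proof
  fix p assume p: "p \<in> slice_dom \<Omega> I"
  have mI: "- I \<in> unit_sphere" using I by (rule unit_sphere_minus)
  obtain D1 where D1: "((\<lambda>p. f (slice_emb I p)) has_derivative D1) (at p)" "D1 (1,0) + I * D1 (0,1) = 0"
    using f I p unfolding regular_iff_cauchy_riemann cauchy_riemann_on_def by blast
  obtain D2 where D2: "((\<lambda>p. f (slice_emb (-I) p)) has_derivative D2) (at p)"
    "D2 (1,0) + (-I) * D2 (0,1) = 0"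
    using f mI p slice_dom_symmetric[OF sym I mI]
    unfolding regular_iff_cauchy_riemann cauchy_riemann_on_def by blast
  have e1: "D1 (1,0) = - (I * D1 (0,1))" using D1(2) by (simp add: eq_neg_iff_add_eq_0)
  have e2: "D2 (1,0) = I * D2 (0,1)" using D2(2) by (simp add: algebra_simps)
  have "(repr_alpha I f has_derivative (\<lambda>h. scaleR (1/2) (D1 h + D2 h))) (at p)"
    unfolding repr_alpha_def[abs_def]
    by (rule bounded_linear.has_derivative[OF bounded_linear_scaleR_right has_derivative_add[OF D1(1) D2(1)]])
  moreover have "(repr_beta I f has_derivative (\<lambda>h. scaleR (-1/2) (I * (D1 h - D2 h)))) (at p)"
    unfolding repr_beta_def[abs_def]
    by (rule bounded_linear.has_derivative[OF bounded_linear_scaleR_right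
          bounded_linear.has_derivative[OF bounded_linear_mult_right has_derivative_diff[OF D1(1) D2(1)]]])
  moreover have "scaleR (1/2) (D1 (1,0) + D2 (1,0)) = scaleR (-1/2) (I * (D1 (0,1) - D2 (0,1)))"
    unfolding e1 e2 by (simp add: algebra_simps)
  moreover have "scaleR (1/2) (D1 (0,1) + D2 (0,1)) = - scaleR (-1/2) (I * (D1 (1,0) - D2 (1,0)))"
    unfolding e1 e2 using unit_sphere_mult_self[OF I] by (simp add: algebra_simps)
  ultimately show "\<exists>Da Db. (repr_alpha I f has_derivative Da) (at p) \<and> (repr_beta I f has_derivative Db) (at p) \<and>
      Da (1,0) = Db (0,1) \<and> Da (0,1) = - Db (1,0)"
    by blast
qed

text \<open>Both sides solve the Cauchy--Riemann equation for J and agree on the real axis.\<close>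
lemma representation_formula:
  assumes f: "regular \<Omega> f" and I: "I \<in> unit_sphere" and J: "J \<in> unit_sphere"
    and sym: "symmetric_set \<Omega>" and sd: "slice_domain \<Omega>" and p: "p \<in> slice_dom \<Omega> I"
  shows "f (slice_emb J p) = repr_alpha I f p + J * repr_beta I f p"
proof -
  define h where "h p = f (slice_emb J p) - repr_alpha I f p - J * repr_beta I f p" for p
  have "cauchy_riemann_on J (slice_dom \<Omega> I) h"
    unfolding cauchy_riemann_on_def
  proof
    fix p assume p: "p \<in> slice_dom \<Omega> I"
    obtain DJ where DJ: "((\<lambda>p. f (slice_emb J p)) has_derivative DJ) (at p)" "DJ (1,0) + J * DJ (0,1) = 0"
      using f J p slice_dom_symmetric[OF sym I J]
      unfolding regular_iff_cauchy_riemann cauchy_riemann_on_def by blast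
    obtain Da Db where D: "(repr_alpha I f has_derivative Da) (at p)" "(repr_beta I f has_derivative Db) (at p)"
      "Da (1,0) = Db (0,1)" "Da (0,1) = - Db (1,0)"
      using repr_cauchy_riemann_pair[OF f I sym] p unfolding cauchy_riemann_pair_def by blast
    have "(h has_derivative (\<lambda>x. DJ x - Da x - J * Db x)) (at p)"
      unfolding h_def[abs_def]
      by (intro has_derivative_diff DJ(1) D(1) bounded_linear.has_derivative[OF bounded_linear_mult_right D(2)])
    moreover have "(DJ (1,0) - Da (1,0) - J * Db (1,0)) + J * (DJ (0,1) - Da (0,1) - J * Db (0,1)) = 0"
    proof -
      have "(DJ (1,0) - Da (1,0) - J * Db (1,0)) + J * (DJ (0,1) - Da (0,1) - J * Db (0,1))
          = (DJ (1,0) + J * DJ (0,1)) - Da (1,0) - J * (Db (1,0) + Da (0,1)) - J * (J * Db (0,1))"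
        by (simp add: algebra_simps)
      then show ?thesis using DJ(2) D(3,4) unit_sphere_mult_self[OF J] by simp
    qed
    ultimately show "\<exists>D. (h has_derivative D) (at p) \<and> D (1,0) + J * D (0,1) = 0" by blast
  qed
  moreover obtain x0 where "(x0, 0) \<in> slice_dom \<Omega> I" using slice_domain_slice_dom[OF sd I] by blast
  ultimately have "h p = 0"
    using cauchy_riemann_eq_0[OF J slice_domain_slice_dom(1,2)[OF sd I]] p
    by (metis repr_alpha_real repr_beta_real diff_self h_def mult_zero_right slice_emb_real diff_zero)
  then show ?thesis by (simp add: h_def algebra_simps)
qed

section \<open>Regular functions with a constant quaternionic combination\<close>

definition quat_basis :: "nat \<Rightarrow> quat" where
  "quat_basis m = (if m = 0 then 1 else if m = 1 then Quat 0 1 0 0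
                   else if m = 2 then Quat 0 0 1 0 else Quat 0 0 0 1)"

lemma sum_lessThan_4: "(\<Sum>m<(4::nat). f m) = f 0 + f 1 + f 2 + (f 3 :: 'a::comm_monoid_add)"
  by (simp add: eval_nat_numeral ac_simps)

lemma quat_basis_unit_sphere: "m \<in> {1, 2, 3} \<Longrightarrow> quat_basis m \<in> unit_sphere"
  by (auto simp: unit_sphere_def quat_basis_def quat_eq_iff)

lemma quat_basis_sum_eq_0:
  assumes "\<And>a. a \<in> quat_basis ` {..<4} \<Longrightarrow> (\<Sum>m<4. quat_basis m * (a * X m)) = 0" and "m < 4"
  shows "X m = 0"
proof -
  have "(\<Sum>m<4. quat_basis m * (quat_basis k * X m)) = 0" if "k < 4" for k
    using assms(1) that by blast
  from this[of 0] this[of 1] this[of 2] this[of 3]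
  have "X 0 = 0 \<and> X 1 = 0 \<and> X 2 = 0 \<and> X 3 = 0"
    by (simp add: sum_lessThan_4 quat_basis_def quat_eq_iff)
  with assms(2) show ?thesis by (auto simp: less_Suc_eq numeral_eq_Suc)
qed

definition cnj_coord :: "nat \<Rightarrow> quat \<Rightarrow> real" where
  "cnj_coord m z = inner (quat_basis m) (cnj z)"

lemma sum_cnj_coord: "(\<Sum>m<4. quat_basis m * of_real (cnj_coord m z)) = cnj z"
  by (simp add: sum_lessThan_4 quat_basis_def cnj_coord_def inner_quat_def quat_eq_iff of_real_def)

text \<open>Comparing the representation formula for J and -J.\<close>
lemma repr_components_sum:
  assumes reg: "\<And>m. m < 4 \<Longrightarrow> regular \<Omega> (\<psi> m)" and I: "I \<in> unit_sphere"
    and sym: "symmetric_set \<Omega>" and sd: "slice_domain \<Omega>"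
    and sum: "\<And>q. q \<in> \<Omega> \<Longrightarrow> (\<Sum>m<4. quat_basis m * \<psi> m q) = c"
    and p: "p \<in> slice_dom \<Omega> I"
  shows "(\<Sum>m<4. quat_basis m * repr_alpha I (\<psi> m) p) = c"
    and "\<forall>J\<in>unit_sphere. (\<Sum>m<4. quat_basis m * (J * repr_beta I (\<psi> m) p)) = 0"
proof -
  define a where "a = (\<Sum>m<4. quat_basis m * repr_alpha I (\<psi> m) p)"
  define b where "b J = (\<Sum>m<4. quat_basis m * (J * repr_beta I (\<psi> m) p))" for J
  have sum_J: "a + b J = c" if J: "J \<in> unit_sphere" for J
  proof -
    have "slice_emb J p \<in> \<Omega>" using p slice_dom_symmetric[OF sym I J] unfolding slice_dom_def by blast
    from sum[OF this] have "(\<Sum>m<4. quat_basis m * (repr_alpha I (\<psi> m) p + J * repr_beta I (\<psi> m) p)) = c"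
      using representation_formula[OF reg I J sym sd p] by simp
    then show ?thesis by (simp add: a_def b_def distrib_left sum.distrib)
  qed
  have b_0: "b J = 0" if J: "J \<in> unit_sphere" for J
  proof -
    have "a - b J = c" using sum_J[OF unit_sphere_minus[OF J]] by (simp add: b_def sum_negf)
    have "scaleR 2 (b J) = (a + b J) - (a - b J)" by (simp add: scaleR_2 algebra_simps)
    also have "\<dots> = 0" using sum_J[OF J] \<open>a - b J = c\<close> by simp
    finally show ?thesis by simp
  qed
  from sum_J[OF I] b_0[OF I] show "(\<Sum>m<4. quat_basis m * repr_alpha I (\<psi> m) p) = c"
    by (simp add: a_def)
  from b_0 show "\<forall>J\<in>unit_sphere. (\<Sum>m<4. quat_basis m * (J * repr_beta I (\<psi> m) p)) = 0"
    by (simp add: b_def)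
qed

text \<open>The left multiples of \<Sum> e_m beta_m by i, j, k vanish by the previous lemma; the sum itself
  vanishes because it is constant (it forms a Cauchy--Riemann pair with the constant \<Sum> e_m alpha_m)
  and zero on the real axis.\<close>
lemma repr_beta_components_eq_0:
  assumes reg: "\<And>m. m < 4 \<Longrightarrow> regular \<Omega> (\<psi> m)" and I: "I \<in> unit_sphere"
    and sym: "symmetric_set \<Omega>" and sd: "slice_domain \<Omega>"
    and sum: "\<And>q. q \<in> \<Omega> \<Longrightarrow> (\<Sum>m<4. quat_basis m * \<psi> m q) = c"
    and p: "p \<in> slice_dom \<Omega> I" and m: "m < 4"
  shows "repr_beta I (\<psi> m) p = 0"
proof -
  define U where "U = slice_dom \<Omega> I"
  have U: "open U" "connected U" using slice_domain_slice_dom[OF sd I] by (simp_all add: U_def)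
  obtain x0 where x0: "(x0, 0) \<in> U" using slice_domain_slice_dom[OF sd I] by (auto simp: U_def)
  note split = repr_components_sum[OF reg I sym sd sum, folded U_def]
  have "cauchy_riemann_pair U (\<lambda>p. \<Sum>m<4. quat_basis m * repr_alpha I (\<psi> m) p)
      (\<lambda>p. \<Sum>m<4. quat_basis m * repr_beta I (\<psi> m) p)"
    using repr_cauchy_riemann_pair[OF reg I sym]
    by (intro cauchy_riemann_pair_sum cauchy_riemann_pair_mult_left) (simp add: U_def)
  from cauchy_riemann_pair_const[OF U this split(1) _ x0] p
  have beta_1: "(\<Sum>m<4. quat_basis m * (1 * repr_beta I (\<psi> m) p)) = 0"
    by (simp add: U_def repr_beta_real)
  show ?thesis
  proof (rule quat_basis_sum_eq_0[OF _ m, where X = "\<lambda>m. repr_beta I (\<psi> m) p"])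
    fix a assume "a \<in> quat_basis ` {..<4}"
    then obtain k where k: "k < 4" "a = quat_basis k" by blast
    show "(\<Sum>m<4. quat_basis m * (a * repr_beta I (\<psi> m) p)) = 0"
    proof (cases "k = 0")
      case True
      with k beta_1 show ?thesis by (simp add: quat_basis_def)
    next
      case False
      with k(1) have "k \<in> {1, 2, 3}" by (auto simp: less_Suc_eq numeral_eq_Suc)
      with k split(2) p show ?thesis by (simp add: U_def quat_basis_unit_sphere)
    qed
  qed
qed

lemma regular_components_const:
  assumes reg: "\<And>m. m < 4 \<Longrightarrow> regular \<Omega> (\<psi> m)" and I: "I \<in> unit_sphere"
    and sym: "symmetric_set \<Omega>" and sd: "slice_domain \<Omega>"
    and sum: "\<And>q. q \<in> \<Omega> \<Longrightarrow> (\<Sum>m<4. quat_basis m * \<psi> m q) = c"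
    and q: "q \<in> \<Omega>" "q' \<in> \<Omega>" and m: "m < 4"
  shows "\<psi> m q = \<psi> m q'"
proof -
  define U where "U = slice_dom \<Omega> I"
  have U: "open U" "connected U" using slice_domain_slice_dom[OF sd I] by (simp_all add: U_def)
  have beta_0: "repr_beta I (\<psi> m) p = 0" if "p \<in> U" for p
    using repr_beta_components_eq_0[OF reg I sym sd sum _ m] that by (simp add: U_def)
  have in_U: "\<exists>J p. J \<in> unit_sphere \<and> p \<in> U \<and> q = slice_emb J p \<and> \<psi> m q = repr_alpha I (\<psi> m) p"
    if "q \<in> \<Omega>" for q
  proof -
    obtain J p where J: "J \<in> unit_sphere" and qp: "q = slice_emb J p" by (rule quat_in_some_slice)
    then have p: "p \<in> U" using that slice_dom_symmetric[OF sym I J] unfolding U_def slice_dom_def by blast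
    then have "\<psi> m q = repr_alpha I (\<psi> m) p"
      using representation_formula[OF reg[OF m] I J sym sd] beta_0 qp by (simp add: U_def)
    with J p qp show ?thesis by blast
  qed
  obtain p p' where p: "p \<in> U" "\<psi> m q = repr_alpha I (\<psi> m) p" and p': "p' \<in> U" "\<psi> m q' = repr_alpha I (\<psi> m) p'"
    using in_U[OF q(1)] in_U[OF q(2)] by blast
  have "(\<lambda>p. - repr_alpha I (\<psi> m) p) p = (\<lambda>p. - repr_alpha I (\<psi> m) p) p'"
    by (rule cauchy_riemann_pair_const[OF U cauchy_riemann_pair_rotate beta_0 p(1) p'(1)])
      (use repr_cauchy_riemann_pair[OF reg[OF m] I sym] in \<open>simp add: U_def\<close>)
  with p p' show ?thesis by simp
qed

section \<open>Vectors and the operator norm\<close>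

definition vinner :: "nat \<Rightarrow> (nat \<Rightarrow> quat) \<Rightarrow> (nat \<Rightarrow> quat) \<Rightarrow> real" where
  "vinner n x y = (\<Sum>i<n. inner (x i) (y i))"

lemma vec_norm_L2: "vec_norm n x = L2_set (\<lambda>i. norm (x i)) {..<n}"
  by (simp add: vec_norm_def L2_set_def)

lemma vec_norm_nonneg: "vec_norm n x \<ge> 0"
  by (simp add: vec_norm_def sum_nonneg)

lemma vec_norm_sq: "(vec_norm n x)\<^sup>2 = (\<Sum>i<n. (norm (x i))\<^sup>2)"
  by (simp add: vec_norm_def sum_nonneg)

lemma vinner_self: "vinner n x x = (vec_norm n x)\<^sup>2"
  by (simp add: vinner_def vec_norm_sq power2_norm_eq_inner)

lemma vinner_le: "vinner n x y \<le> vec_norm n x * vec_norm n y"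
proof -
  have "vinner n x y \<le> (\<Sum>i<n. \<bar>norm (x i)\<bar> * \<bar>norm (y i)\<bar>)"
    unfolding vinner_def
    by (rule sum_mono) (use Cauchy_Schwarz_ineq2 norm_cauchy_schwarz in auto)
  also have "\<dots> \<le> vec_norm n x * vec_norm n y"
    unfolding vec_norm_L2 by (rule L2_set_mult_ineq)
  finally show ?thesis .
qed

lemma norm_le_vec_norm: "i < n \<Longrightarrow> norm (x i) \<le> vec_norm n x"
  unfolding vec_norm_L2 by (rule member_le_L2_set) auto

lemma vec_norm_le_sum: "vec_norm n x \<le> (\<Sum>i<n. norm (x i))"
  unfolding vec_norm_L2 by (rule L2_set_le_sum) simp

lemma vec_norm_scaleR: "vec_norm n (\<lambda>i. scaleR r (x i)) = \<bar>r\<bar> * vec_norm n x"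
proof -
  have "vec_norm n (\<lambda>i. scaleR r (x i)) = sqrt (r\<^sup>2 * (\<Sum>i<n. (norm (x i))\<^sup>2))"
    by (simp add: vec_norm_def sum_distrib_left power_mult_distrib)
  also have "\<dots> = \<bar>r\<bar> * vec_norm n x" by (simp add: real_sqrt_mult vec_norm_def)
  finally show ?thesis .
qed

lemma vec_norm_eq_0: "vec_norm n x = 0 \<longleftrightarrow> (\<forall>i<n. x i = 0)"
  by (auto simp: vec_norm_def sum_nonneg_eq_0_iff)

lemma mat_vec_scaleR: "mat_vec n A (\<lambda>i. scaleR r (x i)) = (\<lambda>i. scaleR r (mat_vec n A x i))"
  by (simp add: mat_vec_def scaleR_sum_right)

lemma mat_vec_bound:
  "vec_norm n (mat_vec n A x) \<le> (\<Sum>i<n. \<Sum>k<n. norm (A i k)) * vec_norm n x"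
proof -
  have "vec_norm n (mat_vec n A x) \<le> (\<Sum>i<n. norm (mat_vec n A x i))" by (rule vec_norm_le_sum)
  also have "\<dots> \<le> (\<Sum>i<n. \<Sum>k<n. norm (A i k) * vec_norm n x)"
  proof (rule sum_mono)
    fix i assume "i \<in> {..<n}"
    have "norm (mat_vec n A x i) \<le> (\<Sum>k<n. norm (A i k * x k))"
      unfolding mat_vec_def by (rule norm_sum)
    also have "\<dots> \<le> (\<Sum>k<n. norm (A i k) * vec_norm n x)"
      by (rule sum_mono) (simp add: norm_mult mult_left_mono norm_le_vec_norm)
    finally show "norm (mat_vec n A x i) \<le> (\<Sum>k<n. norm (A i k) * vec_norm n x)" .
  qed
  also have "\<dots> = (\<Sum>i<n. \<Sum>k<n. norm (A i k)) * vec_norm n x"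
    by (simp add: sum_distrib_right)
  finally show ?thesis .
qed

lemma bdd_above_op_norm: "bdd_above ((\<lambda>x. vec_norm n (mat_vec n A x)) ` {x. vec_norm n x \<le> 1})"
proof (rule bdd_aboveI)
  fix y assume "y \<in> (\<lambda>x. vec_norm n (mat_vec n A x)) ` {x. vec_norm n x \<le> 1}"
  then obtain x where x: "vec_norm n x \<le> 1" "y = vec_norm n (mat_vec n A x)" by auto
  have S: "0 \<le> (\<Sum>i<n. \<Sum>k<n. norm (A i k))" by (simp add: sum_nonneg)
  have "y \<le> (\<Sum>i<n. \<Sum>k<n. norm (A i k)) * vec_norm n x" using x mat_vec_bound by simp
  also have "\<dots> \<le> (\<Sum>i<n. \<Sum>k<n. norm (A i k)) * 1" by (rule mult_left_mono[OF x(1) S])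
  finally show "y \<le> (\<Sum>i<n. \<Sum>k<n. norm (A i k))" by simp
qed

lemma op_norm_upper: "vec_norm n x \<le> 1 \<Longrightarrow> vec_norm n (mat_vec n A x) \<le> op_norm n A"
  unfolding op_norm_def by (rule cSUP_upper[OF _ bdd_above_op_norm]) simp

lemma op_norm_nonneg: "op_norm n A \<ge> 0"
proof -
  have "vec_norm n (\<lambda>_. 0) \<le> 1" by (simp add: vec_norm_def)
  then have "vec_norm n (mat_vec n A (\<lambda>_. 0)) \<le> op_norm n A" by (rule op_norm_upper)
  then show ?thesis using vec_norm_nonneg[of n "mat_vec n A (\<lambda>_. 0)"] by linarith
qed

lemma vec_norm_mat_vec_le: "vec_norm n (mat_vec n A x) \<le> op_norm n A * vec_norm n x"
proof (cases "vec_norm n x = 0")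
  case True
  then have "\<forall>i<n. x i = 0" by (simp add: vec_norm_eq_0)
  then have "mat_vec n A x = (\<lambda>i. 0)" by (simp add: mat_vec_def)
  then show ?thesis using True by (simp add: vec_norm_def)
next
  case False
  define r where "r = 1 / vec_norm n x"
  have r: "r > 0" using False vec_norm_nonneg[of n x] by (simp add: r_def)
  have "vec_norm n (\<lambda>i. scaleR r (x i)) = 1" using False r by (simp add: vec_norm_scaleR r_def)
  then have "vec_norm n (mat_vec n A (\<lambda>i. scaleR r (x i))) \<le> op_norm n A" by (intro op_norm_upper) simp
  then have "r * vec_norm n (mat_vec n A x) \<le> op_norm n A"
    using r by (simp add: mat_vec_scaleR vec_norm_scaleR)
  then show ?thesis using False vec_norm_nonneg[of n x] by (simp add: r_def field_simps)
qed

lemma op_norm_le_0_entry: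
  assumes "op_norm n A \<le> 0" "i < n" "j < n" shows "A i j = 0"
proof -
  define e where "e = (\<lambda>k. if k = j then (1::quat) else 0)"
  have "(\<lambda>i. (norm (e i))\<^sup>2) = (\<lambda>i. if i = j then 1 else 0)" by (auto simp: e_def)
  then have "vec_norm n e = 1" using assms(3) unfolding vec_norm_def by (simp only:) simp
  then have "vec_norm n (mat_vec n A e) \<le> 0" using op_norm_upper[of n e A] assms(1) by simp
  then have "vec_norm n (mat_vec n A e) = 0" using vec_norm_nonneg by (metis antisym)
  then have "mat_vec n A e i = 0" using assms(2) by (simp add: vec_norm_eq_0)
  then show ?thesis using assms(3) by (simp add: mat_vec_def e_def if_distrib sum.delta cong: if_cong)
qed

lemma continuous_on_coordinate [continuous_intros]: "continuous_on S (\<lambda>x::nat \<Rightarrow> quat. x i)"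
  by (rule continuous_on_subset[OF continuous_on_product_coordinates]) simp

lemma continuous_on_vec_norm: "continuous_on S (\<lambda>x. vec_norm n x)"
  unfolding vec_norm_def by (intro continuous_intros)

lemma continuous_on_vec_norm_mat_vec: "continuous_on S (\<lambda>x. vec_norm n (mat_vec n A x))"
  unfolding vec_norm_def mat_vec_def by (intro continuous_intros)

lemma vec_norm_mat_vec_restrict:
  "vec_norm n (\<lambda>i. if i < n then x i else 0) = vec_norm n x"
  "mat_vec n A (\<lambda>i. if i < n then x i else 0) = mat_vec n A x"
  by (simp_all add: vec_norm_def mat_vec_def)

lemma op_norm_attained: "\<exists>v. vec_norm n v \<le> 1 \<and> vec_norm n (mat_vec n A v) = op_norm n A"
proof -
  define S where "S i = (if i < n then cball (0::quat) 1 else {0})" for i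
  define K where "K = PiE UNIV S \<inter> {x. vec_norm n x \<le> 1}"
  have "compactin (product_topology (\<lambda>i. euclidean) UNIV) (PiE UNIV S)"
    unfolding compactin_PiE by (auto simp: S_def)
  then have c0: "compact (PiE UNIV S)"
    by (simp add: euclidean_product_topology)
  have cl: "closed {x. vec_norm n x \<le> 1}"
    by (intro closed_Collect_le continuous_on_vec_norm continuous_on_const)
  have cK: "compact K" unfolding K_def by (rule compact_Int_closed[OF c0 cl])
  have z: "(\<lambda>_. 0) \<in> K" by (simp add: K_def S_def vec_norm_def PiE_def extensional_def)
  obtain v where v: "v \<in> K" "\<And>x. x \<in> K \<Longrightarrow> vec_norm n (mat_vec n A x) \<le> vec_norm n (mat_vec n A v)"
    using continuous_attains_sup[OF cK _ continuous_on_vec_norm_mat_vec, of n A] z by blast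
  have vn: "vec_norm n v \<le> 1" using v(1) by (simp add: K_def)
  have "op_norm n A \<le> vec_norm n (mat_vec n A v)"
    unfolding op_norm_def
  proof (rule cSUP_least)
    show "{x. vec_norm n x \<le> 1} \<noteq> {}" using z by (auto simp: K_def)
    fix x assume x: "x \<in> {x. vec_norm n x \<le> 1}"
    define x' where "x' = (\<lambda>i. if i < n then x i else 0)"
    have "x' \<in> K"
      using x norm_le_vec_norm[of _ n x] by (fastforce simp: K_def x'_def S_def vec_norm_mat_vec_restrict PiE_def extensional_def intro: order_trans)
    then have "vec_norm n (mat_vec n A x') \<le> vec_norm n (mat_vec n A v)" by (rule v(2))
    then show "vec_norm n (mat_vec n A x) \<le> vec_norm n (mat_vec n A v)" by (simp add: x'_def vec_norm_mat_vec_restrict)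
  qed
  moreover have "vec_norm n (mat_vec n A v) \<le> op_norm n A" by (rule op_norm_upper[OF vn])
  ultimately show ?thesis using vn by (intro exI[of _ v]) simp
qed

lemma vec_norm_diff_sq:
  "(vec_norm n (\<lambda>k. a k - b k))\<^sup>2 = (vec_norm n a)\<^sup>2 - 2 * vinner n a b + (vec_norm n b)\<^sup>2"
proof -
  have "(vec_norm n (\<lambda>k. a k - b k))\<^sup>2 = (\<Sum>k<n. (norm (a k))\<^sup>2 - 2 * inner (a k) (b k) + (norm (b k))\<^sup>2)"
    unfolding vec_norm_sq
    by (rule sum.cong) (simp_all add: power2_norm_eq_inner inner_diff_left inner_diff_right inner_commute)
  also have "\<dots> = (vec_norm n a)\<^sup>2 - 2 * vinner n a b + (vec_norm n b)\<^sup>2"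
    by (simp add: vec_norm_sq vinner_def sum.distrib sum_subtractf sum_distrib_left)
  finally show ?thesis .
qed

lemma vec_eq_of_vinner_eq:
  assumes "vec_norm n x \<le> vec_norm n y" "vinner n x y = (vec_norm n y)\<^sup>2" "i < n"
  shows "x i = y i"
proof -
  have "(vec_norm n x)\<^sup>2 \<le> (vec_norm n y)\<^sup>2"
    using assms(1) vec_norm_nonneg[of n x] by (rule power_mono)
  then have "(vec_norm n (\<lambda>k. x k - y k))\<^sup>2 \<le> 0"
    unfolding vec_norm_diff_sq assms(2) by simp
  then have "vec_norm n (\<lambda>k. x k - y k) = 0" by simp
  with assms(3) show ?thesis by (simp add: vec_norm_eq_0)
qed

section \<open>Matrices and Householder reflections\<close>

lemma mat_mult_assoc: "mat_mult n (mat_mult n A B) C = mat_mult n A (mat_mult n B C)"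
proof (intro ext)
  fix i j
  have "mat_mult n (mat_mult n A B) C i j = (\<Sum>k<n. \<Sum>l<n. A i l * B l k * C k j)"
    by (simp add: mat_mult_def sum_distrib_right)
  also have "\<dots> = (\<Sum>l<n. \<Sum>k<n. A i l * (B l k * C k j))"
    by (subst sum.swap) (simp add: mult.assoc)
  also have "\<dots> = mat_mult n A (mat_mult n B C) i j"
    by (simp add: mat_mult_def sum_distrib_left)
  finally show "mat_mult n (mat_mult n A B) C i j = mat_mult n A (mat_mult n B C) i j" .
qed

lemma mat_vec_mult: "mat_vec n (mat_mult n A B) x = mat_vec n A (mat_vec n B x)"
proof
  fix i
  have "mat_vec n (mat_mult n A B) x i = (\<Sum>k<n. \<Sum>l<n. A i l * B l k * x k)"
    by (simp add: mat_vec_def mat_mult_def sum_distrib_right)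
  also have "\<dots> = (\<Sum>l<n. \<Sum>k<n. A i l * (B l k * x k))"
    by (subst sum.swap) (simp add: mult.assoc)
  also have "\<dots> = mat_vec n A (mat_vec n B x) i"
    by (simp add: mat_vec_def sum_distrib_left)
  finally show "mat_vec n (mat_mult n A B) x i = mat_vec n A (mat_vec n B x) i" .
qed

lemma mat_adj_adj [simp]: "mat_adj (mat_adj A) = A"
  by (simp add: mat_adj_def)

lemma mat_adj_mult: "mat_adj (mat_mult n A B) = mat_mult n (mat_adj B) (mat_adj A)"
  by (intro ext) (simp add: mat_adj_def mat_mult_def cnj_sum cnj_mult)

lemma sum_delta_left: "i < (n::nat) \<Longrightarrow> (\<Sum>k<n. (if i = k then 1 else 0) * (f k::quat)) = f i"
proof -
  assume i: "i < n"
  have "(\<Sum>k<n. (if i = k then 1 else 0) * f k) = (\<Sum>k<n. if i = k then f i else 0)"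
    by (rule sum.cong) auto
  also have "\<dots> = f i" using i by simp
  finally show ?thesis .
qed

lemma sum_delta_right: "j < (n::nat) \<Longrightarrow> (\<Sum>k<n. (f k::quat) * (if k = j then 1 else 0)) = f j"
proof -
  assume j: "j < n"
  have "(\<Sum>k<n. f k * (if k = j then 1 else 0)) = (\<Sum>k<n. if k = j then f j else 0)"
    by (rule sum.cong) auto
  also have "\<dots> = f j" using j by simp
  finally show ?thesis .
qed

lemma mat_mult_id_right: "j < n \<Longrightarrow> mat_mult n A mat_id i j = A i j"
  by (simp add: mat_mult_def mat_id_def sum_delta_right)

lemma mat_mult_id_left: "i < n \<Longrightarrow> mat_mult n mat_id A i j = A i j"
  by (simp add: mat_mult_def mat_id_def sum_delta_left)

lemma mat_eq_mult:
  assumes "mat_eq n A A'" "mat_eq n B B'" shows "mat_eq n (mat_mult n A B) (mat_mult n A' B')"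
  using assms unfolding mat_eq_def mat_mult_def by simp

lemma mat_eq_refl: "mat_eq n A A"
  by (simp add: mat_eq_def)

lemma mat_eq_sym: "mat_eq n A B \<Longrightarrow> mat_eq n B A"
  by (simp add: mat_eq_def)

lemma mat_eq_trans: "mat_eq n A B \<Longrightarrow> mat_eq n B C \<Longrightarrow> mat_eq n A C"
  by (simp add: mat_eq_def)

lemma isometry_mult:
  assumes "mat_eq n (mat_mult n (mat_adj U) U) mat_id" "mat_eq n (mat_mult n (mat_adj W) W) mat_id"
  shows "mat_eq n (mat_mult n (mat_adj (mat_mult n U W)) (mat_mult n U W)) mat_id"
proof -
  have "mat_mult n (mat_adj (mat_mult n U W)) (mat_mult n U W) =
      mat_mult n (mat_adj W) (mat_mult n (mat_mult n (mat_adj U) U) W)"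
    by (simp add: mat_adj_mult mat_mult_assoc)
  moreover have "mat_eq n (mat_mult n (mat_adj W) (mat_mult n (mat_mult n (mat_adj U) U) W))
      (mat_mult n (mat_adj W) (mat_mult n mat_id W))"
    using assms(1) by (intro mat_eq_mult mat_eq_refl)
  moreover have "mat_eq n (mat_mult n (mat_adj W) (mat_mult n mat_id W)) (mat_mult n (mat_adj W) W)"
    by (intro mat_eq_mult mat_eq_refl) (simp add: mat_eq_def mat_mult_id_left)
  ultimately show ?thesis using assms(2) by (metis mat_eq_trans)
qed

lemma unitary_mult:
  assumes "unitary n U" "unitary n W" shows "unitary n (mat_mult n U W)"
proof -
  have "mat_eq n (mat_mult n (mat_adj (mat_mult n (mat_adj W) (mat_adj U))) (mat_mult n (mat_adj W) (mat_adj U))) mat_id"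
    using assms by (intro isometry_mult) (simp_all add: unitary_def)
  then have "mat_eq n (mat_mult n (mat_mult n U W) (mat_adj (mat_mult n U W))) mat_id"
    by (simp add: mat_adj_mult)
  with assms show ?thesis by (simp add: unitary_def isometry_mult)
qed

lemma unitary_adj: "unitary n U \<Longrightarrow> unitary n (mat_adj U)"
  by (simp add: unitary_def)

definition householder :: "nat \<Rightarrow> (nat \<Rightarrow> quat) \<Rightarrow> nat \<Rightarrow> nat \<Rightarrow> quat" where
  "householder n w = (\<lambda>i j. mat_id i j - scaleR (2 / (vec_norm n w)\<^sup>2) (w i * cnj (w j)))"

lemma mat_id_cnj: "cnj (mat_id j i) = mat_id i j"
  by (simp add: mat_id_def)

lemma householder_adj: "mat_adj (householder n w) = householder n w"
  by (intro ext) (simp add: mat_adj_def householder_def mat_id_cnj cnj_mult)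

lemma sum_cnj_self: "(\<Sum>k<n. cnj (w k) * w k) = of_real ((vec_norm n w)\<^sup>2)"
  by (simp add: cnj_mult_self vec_norm_sq of_real_sum)

lemma householder_mult_self:
  assumes "i < n" "j < n"
  shows "mat_mult n (householder n w) (householder n w) i j = mat_id i j"
proof -
  define c where "c = 2 / (vec_norm n w)\<^sup>2"
  define a where "a i j = scaleR c (w i * cnj (w j))" for i j
  have H: "householder n w = (\<lambda>i j. mat_id i j - a i j)" by (simp add: householder_def a_def c_def)
  have "mat_mult n (householder n w) (householder n w) i j =
      (\<Sum>k<n. mat_id i k * mat_id k j) - (\<Sum>k<n. mat_id i k * a k j) - (\<Sum>k<n. a i k * mat_id k j)
      + (\<Sum>k<n. a i k * a k j)"
  proof -
    have e: "(mat_id i k - a i k) * (mat_id k j - a k j) =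
        mat_id i k * mat_id k j - mat_id i k * a k j - a i k * mat_id k j + a i k * a k j" for k
      by (simp add: algebra_simps)
    show ?thesis unfolding H mat_mult_def e by (simp only: sum.distrib sum_subtractf)
  qed
  also have "(\<Sum>k<n. mat_id i k * mat_id k j) = mat_id i j"
    using assms(1) unfolding mat_id_def by (rule sum_delta_left)
  also have "(\<Sum>k<n. mat_id i k * a k j) = a i j"
    using assms(1) unfolding mat_id_def by (rule sum_delta_left)
  also have "(\<Sum>k<n. a i k * mat_id k j) = a i j"
    using assms(2) unfolding mat_id_def by (rule sum_delta_right)
  also have "(\<Sum>k<n. a i k * a k j) = scaleR (c * c) (w i * (\<Sum>k<n. cnj (w k) * w k) * cnj (w j))"
  proof -
    have e: "a i k * a k j = scaleR (c * c) (w i * (cnj (w k) * w k) * cnj (w j))" for k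
      by (simp add: a_def mult.assoc)
    show ?thesis unfolding e by (simp only: sum_distrib_left sum_distrib_right scaleR_sum_right)
  qed
  also have "\<dots> = scaleR (c * c * (vec_norm n w)\<^sup>2) (w i * cnj (w j))"
  proof -
    have "w i * of_real ((vec_norm n w)\<^sup>2) * cnj (w j) = of_real ((vec_norm n w)\<^sup>2) * (w i * cnj (w j))"
      by (simp only: of_real_mult_commute_quat[symmetric] mult.assoc)
    then show ?thesis unfolding sum_cnj_self by (simp add: scaleR_conv_of_real mult.assoc)
  qed
  also have "c * c * (vec_norm n w)\<^sup>2 = 2 * c"
    by (cases "vec_norm n w = 0") (simp_all add: c_def power2_eq_square)
  finally have "mat_mult n (householder n w) (householder n w) i j = mat_id i j - a i j - a i j + scaleR (2 * c) (w i * cnj (w j))" .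
  also have "\<dots> = mat_id i j"
  proof -
    have "scaleR (2 * c) (w i * cnj (w j)) = scaleR c (w i * cnj (w j)) + scaleR c (w i * cnj (w j))"
      by (simp add: scaleR_add_left[symmetric])
    then show ?thesis unfolding a_def by simp
  qed
  finally show ?thesis .
qed

lemma unitary_householder: "unitary n (householder n w)"
  unfolding unitary_def householder_adj mat_eq_def using householder_mult_self by auto

lemma householder_swap:
  assumes xy: "vec_norm n x = vec_norm n y" and r: "(\<Sum>k<n. cnj (x k) * y k) = of_real r" and i: "i < n"
  shows "mat_vec n (householder n (\<lambda>k. x k - y k)) x i = y i"
proof -
  define w where "w k = x k - y k" for k
  have wdef: "(\<lambda>k. x k - y k) = w" by (rule ext) (simp add: w_def)
  define X where "X = vec_norm n x"
  define c where "c = 2 / (vec_norm n w)\<^sup>2"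
  have "mat_vec n (householder n w) x i = (\<Sum>k<n. mat_id i k * x k) - (\<Sum>k<n. scaleR c (w i * cnj (w k)) * x k)"
    unfolding mat_vec_def householder_def c_def by (simp only: left_diff_distrib sum_subtractf)
  also have "(\<Sum>k<n. mat_id i k * x k) = x i" using i unfolding mat_id_def by (rule sum_delta_left)
  also have "(\<Sum>k<n. scaleR c (w i * cnj (w k)) * x k) = scaleR c (w i * (\<Sum>k<n. cnj (w k) * x k))"
    by (simp add: sum_distrib_left scaleR_sum_right mult.assoc)
  also have "(\<Sum>k<n. cnj (w k) * x k) = of_real (X\<^sup>2 - r)"
  proof -
    have "(\<Sum>k<n. cnj (w k) * x k) = (\<Sum>k<n. cnj (x k) * x k) - (\<Sum>k<n. cnj (y k) * x k)"
      by (simp add: w_def left_diff_distrib sum_subtractf)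
    also have "(\<Sum>k<n. cnj (y k) * x k) = cnj (\<Sum>k<n. cnj (x k) * y k)"
      by (simp add: cnj_sum cnj_mult)
    finally show ?thesis using r by (simp add: sum_cnj_self X_def)
  qed
  finally have Hx: "mat_vec n (householder n w) x i = x i - scaleR c (w i * of_real (X\<^sup>2 - r))" .
  have vr: "vinner n x y = r"
  proof -
    have "vinner n x y = quat.Re (\<Sum>k<n. cnj (x k) * y k)"
      by (simp only: vinner_def Re_cnj_mult[symmetric] Re_sum)
    then show ?thesis using r by simp
  qed
  have nw: "(vec_norm n w)\<^sup>2 = 2 * (X\<^sup>2 - r)"
    using vec_norm_diff_sq[of n x y] xy vr unfolding wdef by (simp add: X_def)
  show ?thesis unfolding wdef
  proof (cases "X\<^sup>2 - r = 0")
    case True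
    then have "vec_norm n w = 0" using nw by simp
    then have "w i = 0" using i by (simp add: vec_norm_eq_0)
    then show "mat_vec n (householder n w) x i = y i" using Hx by (simp add: w_def)
  next
    case False
    have "c * (X\<^sup>2 - r) = 1" using False by (simp add: c_def nw)
    have "scaleR c (w i * of_real (X\<^sup>2 - r)) = scaleR (c * (X\<^sup>2 - r)) (w i)"
      by (simp add: of_real_def)
    also have "\<dots> = w i" using \<open>c * (X\<^sup>2 - r) = 1\<close> by simp
    finally show "mat_vec n (householder n w) x i = y i" using Hx by (simp add: w_def)
  qed
qed

definition diag_first :: "quat \<Rightarrow> nat \<Rightarrow> nat \<Rightarrow> quat" where
  "diag_first g = (\<lambda>i j. if i = j then (if i = 0 then g else 1) else 0)"

lemma unitary_diag_first:
  assumes "norm g = 1" shows "unitary n (diag_first g)"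
proof -
  have "cnj g * g = 1" "g * cnj g = 1"
    using assms by (simp_all add: cnj_mult_self mult_cnj_self)
  then show ?thesis
    by (auto simp: unitary_def mat_eq_def mat_mult_def mat_adj_def diag_first_def mat_id_def
        if_distrib[of "\<lambda>x. x * _"] if_distrib[of "\<lambda>x. _ * x"] cong: if_cong)
qed

definition phase :: "quat \<Rightarrow> quat" where
  "phase z = (if z = 0 then 1 else scaleR (1 / norm z) z)"

lemma phase_norm: "norm (phase z) = 1"
  by (simp add: phase_def)

lemma phase_cnj_mult: "cnj (phase z) * z = of_real (norm z)"
proof (cases "z = 0")
  case True then show ?thesis by (simp add: phase_def)
next
  case False
  then have "cnj (phase z) * z = scaleR (1 / norm z) (of_real ((norm z)\<^sup>2))"
    by (simp add: phase_def cnj_mult_self)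
  also have "\<dots> = of_real (norm z)" using False by (simp add: of_real_def power2_eq_square)
  finally show ?thesis .
qed

lemma sum_mult_if_0: "0 < (n::nat) \<Longrightarrow> (\<Sum>l<n. f l * (if l = 0 then g else 0)) = (f 0 * g :: quat)"
proof -
  assume n: "0 < n"
  have "(\<Sum>l<n. f l * (if l = 0 then g else 0)) = (\<Sum>l<n. if l = 0 then f 0 * g else 0)"
    by (rule sum.cong) auto
  also have "\<dots> = f 0 * g" using n by simp
  finally show ?thesis .
qed

lemma unitary_first_column:
  assumes n: "1 \<le> n" and v: "vec_norm n v = 1"
  shows "\<exists>W. unitary n W \<and> (\<forall>k<n. W k 0 = v k)"
proof -
  define g where "g = phase (v 0)"
  define x where "x k = (if k = 0 then g else 0)" for k :: nat
  have n0: "0 < n" using n by simp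
  have xn: "vec_norm n x = 1"
  proof -
    have "(\<Sum>k<n. (norm (x k))\<^sup>2) = (\<Sum>k<n. if k = 0 then 1 else 0)"
      by (rule sum.cong) (auto simp: x_def g_def phase_norm)
    then show ?thesis using n0 by (simp add: vec_norm_def)
  qed
  have xr: "(\<Sum>k<n. cnj (x k) * v k) = of_real (norm (v 0))"
  proof -
    have "(\<Sum>k<n. cnj (x k) * v k) = (\<Sum>k<n. if k = 0 then cnj g * v 0 else 0)"
      by (rule sum.cong) (auto simp: x_def)
    then show ?thesis using n0 by (simp add: g_def phase_cnj_mult)
  qed
  define H where "H = householder n (\<lambda>k. x k - v k)"
  have Hx: "mat_vec n H x k = v k" if "k < n" for k
    unfolding H_def by (rule householder_swap[OF _ xr that]) (simp add: xn v)
  define W where "W = mat_mult n H (diag_first g)"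
  have "unitary n W" unfolding W_def H_def
    by (intro unitary_mult unitary_householder unitary_diag_first) (simp add: g_def phase_norm)
  moreover have "W k 0 = v k" if "k < n" for k
  proof -
    have "W k 0 = H k 0 * g" unfolding W_def mat_mult_def diag_first_def
      using sum_mult_if_0[OF n0, of "H k" g] by (simp cong: if_cong)
    also have "\<dots> = mat_vec n H x k" unfolding mat_vec_def x_def
      using sum_mult_if_0[OF n0, of "H k" g] by simp
    also have "\<dots> = v k" by (rule Hx[OF that])
    finally show ?thesis .
  qed
  ultimately show ?thesis by blast
qed

section \<open>Maximum modulus for regular matrix functions\<close>

lemma regular_eq_of_real_eq:
  assumes sd: "slice_domain \<Omega>" and f: "regular \<Omega> f"
    and real: "\<And>x. of_real x \<in> \<Omega> \<Longrightarrow> f (of_real x) = c" and q: "q \<in> \<Omega>"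
  shows "f q = c"
proof -
  obtain J p where J: "J \<in> unit_sphere" and qp: "q = slice_emb J p" by (rule quat_in_some_slice)
  obtain x0 where x0: "(x0, 0) \<in> slice_dom \<Omega> J" using slice_domain_slice_dom[OF sd J] by blast
  have "cauchy_riemann_on J (slice_dom \<Omega> J) (\<lambda>p. f (slice_emb J p) - c)"
    using f J by (intro cauchy_riemann_diff cauchy_riemann_const) (simp add: regular_iff_cauchy_riemann)
  then have "f (slice_emb J p) - c = 0"
    by (rule cauchy_riemann_eq_0[OF J slice_domain_slice_dom(1,2)[OF sd J] _ x0])
      (use q qp real in \<open>simp_all add: slice_dom_def slice_emb_real\<close>)
  with qp show ?thesis by simp
qed

text \<open>The real part of \<psi> = \<langle>g, g(q0)\<rangle> is maximal at q0, so by the maximum principle on the slice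
  through q0 equality holds in Cauchy--Schwarz there, i.e. g = g(q0) on that slice.\<close>
lemma regular_vector_max_norm_const:
  assumes sd: "slice_domain \<Omega>" and I: "I \<in> unit_sphere" and q0: "q0 \<in> slice \<Omega> I"
    and g: "\<And>k. k < n \<Longrightarrow> regular \<Omega> (g k)"
    and le: "\<And>q. q \<in> \<Omega> \<Longrightarrow> vec_norm n (\<lambda>k. g k q) \<le> vec_norm n (\<lambda>k. g k q0)"
    and q: "q \<in> \<Omega>" and k: "k < n"
  shows "g k q = g k q0"
proof -
  define c where "c = (\<lambda>k. g k q0)"
  define \<psi> where "\<psi> q = (\<Sum>k<n. g k q * cnj (c k))" for q
  have Re_\<psi>: "quat.Re (\<psi> q) = vinner n (\<lambda>k. g k q) c" for q
    by (simp only: \<psi>_def Re_sum Re_mult_cnj vinner_def)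
  have Re_\<psi>_le: "quat.Re (\<psi> q) \<le> (vec_norm n c)\<^sup>2" if "q \<in> \<Omega>" for q
  proof -
    have "quat.Re (\<psi> q) \<le> vec_norm n (\<lambda>k. g k q) * vec_norm n c"
      unfolding Re_\<psi> by (rule vinner_le)
    also have "\<dots> \<le> vec_norm n c * vec_norm n c"
      using mult_right_mono[OF le[OF that] vec_norm_nonneg[of n c]] by (simp add: c_def)
    finally show ?thesis by (simp add: power2_eq_square)
  qed
  have Re_\<psi>_q0: "quat.Re (\<psi> q0) = (vec_norm n c)\<^sup>2"
    by (simp add: Re_\<psi> vinner_self c_def)
  have "regular \<Omega> \<psi>"
    unfolding \<psi>_def by (intro regular_sum regular_mult_right g) simp
  then have cr: "cauchy_riemann_on I (slice_dom \<Omega> I) (\<lambda>p. \<psi> (slice_emb I p))"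
    using I by (simp add: regular_iff_cauchy_riemann)
  obtain p0 where p0: "q0 = slice_emb I p0" "p0 \<in> slice_dom \<Omega> I" using q0 by (rule slice_memE)
  have on_slice: "g k (slice_emb I p) = c k" if p: "p \<in> slice_dom \<Omega> I" and k: "k < n" for p k
  proof (rule vec_eq_of_vinner_eq[where x = "\<lambda>k. g k (slice_emb I p)", OF _ _ k])
    show "vec_norm n (\<lambda>k. g k (slice_emb I p)) \<le> vec_norm n c"
      using le p by (simp add: slice_dom_def c_def)
    have "quat.Re (\<psi> (slice_emb I p)) = quat.Re (\<psi> (slice_emb I p0))"
      by (rule cauchy_riemann_Re_max[OF I slice_domain_slice_dom(1,2)[OF sd I] cr p0(2) _ p])
        (use Re_\<psi>_le Re_\<psi>_q0 p0(1) in \<open>simp add: slice_dom_def\<close>)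
    then show "vinner n (\<lambda>k. g k (slice_emb I p)) c = (vec_norm n c)\<^sup>2"
      using Re_\<psi> Re_\<psi>_q0 p0(1) by simp
  qed
  have "g k q = c k"
  proof (rule regular_eq_of_real_eq[OF sd g[OF k] _ q])
    fix x assume "of_real x \<in> \<Omega>"
    then have "(x, 0) \<in> slice_dom \<Omega> I" by (simp add: slice_dom_def slice_emb_real)
    from on_slice[OF this k] show "g k (of_real x) = c k" by (simp add: slice_emb_real)
  qed
  then show ?thesis by (simp add: c_def)
qed

lemma sum_row_mat_vec:
  "(\<Sum>j<n. (\<Sum>k<n. a k * A k j) * y j) = (\<Sum>k<n. a k * mat_vec n A y k)"
proof -
  have "(\<Sum>j<n. (\<Sum>k<n. a k * A k j) * y j) = (\<Sum>j<n. \<Sum>k<n. a k * (A k j * y j))"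
    by (simp add: sum_distrib_right mult.assoc)
  also have "\<dots> = (\<Sum>k<n. a k * mat_vec n A y k)"
    by (subst sum.swap) (simp add: mat_vec_def sum_distrib_left)
  finally show ?thesis .
qed

text \<open>The row u* A has norm at most s and inner product s^2 with s v*, so equality holds in
  Cauchy--Schwarz.\<close>
lemma left_singular_vector:
  assumes u: "vec_norm n u = 1" and v: "vec_norm n v = 1" and s: "s \<ge> 0"
    and A: "op_norm n A \<le> s" and Av: "\<And>i. i < n \<Longrightarrow> mat_vec n A v i = scaleR s (u i)"
    and j: "j < n"
  shows "(\<Sum>k<n. cnj (u k) * A k j) = scaleR s (cnj (v j))"
proof -
  define w where "w j = (\<Sum>k<n. cnj (u k) * A k j)" for j
  define y where "y j = scaleR s (cnj (v j))" for j
  have "vec_norm n (\<lambda>j. cnj (v j)) = 1" using v by (simp add: vec_norm_def)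
  then have norm_y: "vec_norm n y = s"
    using s unfolding y_def vec_norm_scaleR by simp
  have "(vec_norm n w)\<^sup>2 = quat.Re (\<Sum>j<n. w j * cnj (w j))"
    by (simp add: Re_sum mult_cnj_self vec_norm_sq flip: of_real_power)
  also have "\<dots> = vinner n u (mat_vec n A (\<lambda>j. cnj (w j)))"
    by (simp only: w_def sum_row_mat_vec Re_sum vinner_def Re_cnj_mult)
  also have "\<dots> \<le> vec_norm n u * (op_norm n A * vec_norm n (\<lambda>j. cnj (w j)))"
    by (rule order_trans[OF vinner_le mult_left_mono[OF vec_norm_mat_vec_le vec_norm_nonneg]])
  also have "\<dots> \<le> s * vec_norm n w"
    using A u mult_right_mono[OF A vec_norm_nonneg[of n w]] by (simp add: vec_norm_def)
  finally have w_le: "vec_norm n w \<le> vec_norm n y"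
    using s by (cases "vec_norm n w = 0") (simp_all add: norm_y power2_eq_square mult_le_cancel_right)
  have "vinner n w y = s * quat.Re (\<Sum>j<n. w j * v j)"
    by (simp add: vinner_def y_def Re_mult_cnj[symmetric] Re_sum sum_distrib_left)
  also have "(\<Sum>j<n. w j * v j) = (\<Sum>k<n. cnj (u k) * mat_vec n A v k)"
    unfolding w_def by (rule sum_row_mat_vec)
  also have "quat.Re (\<Sum>k<n. cnj (u k) * mat_vec n A v k) = (\<Sum>k<n. s * (norm (u k))\<^sup>2)"
    unfolding Re_sum by (intro sum.cong) (simp_all only: lessThan_iff Av Re_cnj_mult power2_norm_eq_inner inner_scaleR_right)
  finally have w_y: "vinner n w y = (vec_norm n y)\<^sup>2"
    using u vec_norm_sq[of n u] by (simp add: norm_y power2_eq_square flip: sum_distrib_left)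
  from vec_eq_of_vinner_eq[OF w_le w_y j] show ?thesis by (simp add: w_def y_def)
qed

section \<open>A unitary change of rows that preserves regularity\<close>

lemma householder_mult_eq:
  assumes "m < n"
  shows "mat_mult n (householder n w) A m l =
    A m l - scaleR (2 / (vec_norm n w)\<^sup>2) (w m * (\<Sum>k<n. cnj (w k) * A k l))"
proof -
  define c where "c = 2 / (vec_norm n w)\<^sup>2"
  have "mat_mult n (householder n w) A m l =
      (\<Sum>k<n. mat_id m k * A k l) - (\<Sum>k<n. scaleR c (w m * cnj (w k)) * A k l)"
    unfolding mat_mult_def householder_def c_def by (simp only: left_diff_distrib sum_subtractf)
  also have "(\<Sum>k<n. mat_id m k * A k l) = A m l"
    using assms unfolding mat_id_def by (rule sum_delta_left)
  also have "(\<Sum>k<n. scaleR c (w m * cnj (w k)) * A k l) = scaleR c (w m * (\<Sum>k<n. cnj (w k) * A k l))"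
    by (simp add: sum_distrib_left scaleR_sum_right mult.assoc)
  finally show ?thesis by (simp add: c_def)
qed

text \<open>Left multiplication by a constant non-real matrix does not preserve regularity in general,
  but a Householder reflection along w only subtracts multiples of the row w* F.\<close>
lemma householder_mult_regular:
  assumes sd: "slice_domain \<Omega>" and F: "mat_regular n \<Omega> F"
    and const: "\<And>q l. q \<in> \<Omega> \<Longrightarrow> l < n \<Longrightarrow> (\<Sum>k<n. cnj (w k) * F q k l) = C l"
  shows "mat_regular n \<Omega> (\<lambda>q. mat_mult n (householder n w) (F q))"
  unfolding mat_regular_def
proof (intro allI impI)
  fix m l assume ml: "m < n" "l < n"
  show "regular \<Omega> (\<lambda>q. mat_mult n (householder n w) (F q) m l)"
  proof (rule regular_cong[OF sd])
    show "regular \<Omega> (\<lambda>q. F q m l - scaleR (2 / (vec_norm n w)\<^sup>2) (w m * C l))"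
      using F ml by (intro regular_diff regular_const) (simp add: mat_regular_def)
  qed (simp add: householder_mult_eq ml const)
qed

lemma mat_regular_of_real_mult:
  assumes "mat_regular n \<Omega> G"
  shows "mat_regular n \<Omega> (\<lambda>q. mat_mult n (\<lambda>i j. of_real (R i j)) (G q))"
  using assms unfolding mat_regular_def mat_mult_def
  by (intro allI impI regular_sum regular_of_real_mult) simp

lemma householder_of_real:
  "householder n (\<lambda>k. of_real (r k)) =
    (\<lambda>i j. of_real ((if i = j then 1 else 0) - 2 / (vec_norm n (\<lambda>k. of_real (r k)))\<^sup>2 * (r i * r j)))"
proof (intro ext)
  fix i j
  have "mat_id i j = (of_real (if i = j then 1 else 0) :: quat)" by (simp add: mat_id_def)
  then show "householder n (\<lambda>k. of_real (r k)) i j =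
      of_real ((if i = j then 1 else 0) - 2 / (vec_norm n (\<lambda>k. of_real (r k)))\<^sup>2 * (r i * r j))"
    by (simp only: householder_def cnj_of_real of_real_diff of_real_mult scaleR_conv_of_real)
qed

text \<open>The real reflection along e_1 - r maps e_1 to r, and the reflection along r \<beta> - u maps r \<beta>
  to u; the phase \<beta> makes the inner product of r \<beta> and u real, as a Householder swap requires.\<close>
lemma householder_pair_first_column:
  fixes r :: "nat \<Rightarrow> real"
  assumes n: "1 \<le> n" and r: "vec_norm n (\<lambda>k. of_real (r k)) = 1" and u: "vec_norm n u = 1"
    and k: "k < n"
  defines "\<beta> \<equiv> phase (\<Sum>l<n. of_real (r l) * u l)"
  shows "mat_mult n (householder n (\<lambda>l. of_real (r l) * \<beta> - u l))
      (householder n (\<lambda>l. of_real ((if l = 0 then 1 else 0) - r l))) k 0 = u k * cnj \<beta>"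
proof -
  have n0: "0 < n" using n by simp
  define t where "t l = (of_real (r l) :: quat)" for l
  define e where "e l = (if l = 0 then 1 else (0::quat))" for l :: nat
  define x where "x l = t l * \<beta>" for l
  define P where "P = householder n (\<lambda>l. of_real ((if l = 0 then 1 else 0) - r l))"
  define H where "H = householder n (\<lambda>l. x l - u l)"
  have P_col: "P l 0 = t l" if "l < n" for l
  proof -
    have "(\<Sum>l<n. (norm (e l))\<^sup>2) = (\<Sum>l<n. if l = 0 then 1 else 0)"
      by (rule sum.cong) (auto simp: e_def)
    then have "vec_norm n e = 1" using n0 by (simp add: vec_norm_def)
    moreover have "(\<Sum>l<n. cnj (e l) * t l) = (\<Sum>l<n. if l = 0 then t 0 else 0)"
      by (rule sum.cong) (auto simp: e_def)
    then have "(\<Sum>l<n. cnj (e l) * t l) = of_real (r 0)" using n0 by (simp add: t_def)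
    moreover have "P = householder n (\<lambda>l. e l - t l)"
      unfolding P_def by (rule arg_cong[where f = "householder n"]) (simp add: e_def t_def fun_eq_iff)
    ultimately have "mat_vec n P e l = t l"
      using r that unfolding t_def[abs_def] by (simp add: householder_swap)
    then show ?thesis using sum_mult_if_0[OF n0] by (simp add: mat_vec_def e_def)
  qed
  have "(\<Sum>l<n. cnj (x l) * u l) = cnj \<beta> * (\<Sum>l<n. of_real (r l) * u l)"
    by (simp add: x_def t_def cnj_mult sum_distrib_left mult.assoc)
  also have "\<dots> = of_real (norm (\<Sum>l<n. of_real (r l) * u l))" by (simp add: \<beta>_def phase_cnj_mult)
  finally have H_x: "mat_vec n H x k = u k"
    using r u k unfolding H_def
    by (intro householder_swap) (simp_all add: vec_norm_def x_def t_def norm_mult \<beta>_def phase_norm)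
  have "mat_mult n H P k 0 = (\<Sum>l<n. H k l * t l)"
    unfolding mat_mult_def by (rule sum.cong) (simp_all add: P_col)
  then have "mat_mult n H P k 0 * \<beta> = u k"
    using H_x by (simp add: mat_vec_def x_def sum_distrib_right mult.assoc)
  then have "mat_mult n H P k 0 * \<beta> * cnj \<beta> = u k * cnj \<beta>" by simp
  then show ?thesis
    by (simp add: mult.assoc mult_cnj_self \<beta>_def phase_norm H_def P_def x_def t_def)
qed

text \<open>U* F = P (H F) with P real, and H F is regular because (r \<beta> - u)* F = cnj \<beta> (r^T F) - u* F
  is constant.\<close>
lemma unitary_first_column_regular:
  fixes r :: "nat \<Rightarrow> real"
  assumes n: "1 \<le> n" and sd: "slice_domain \<Omega>" and F: "mat_regular n \<Omega> F"
    and r: "vec_norm n (\<lambda>k. of_real (r k)) = 1" and u: "vec_norm n u = 1"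
    and r_const: "\<And>q l. q \<in> \<Omega> \<Longrightarrow> l < n \<Longrightarrow> (\<Sum>k<n. of_real (r k) * F q k l) = R l"
    and u_const: "\<And>q l. q \<in> \<Omega> \<Longrightarrow> l < n \<Longrightarrow> (\<Sum>k<n. cnj (u k) * F q k l) = C l"
  obtains U \<beta> where "unitary n U" "norm \<beta> = 1" "\<And>k. k < n \<Longrightarrow> U k 0 = u k * cnj \<beta>"
    "mat_regular n \<Omega> (\<lambda>q. mat_mult n (mat_adj U) (F q))"
proof -
  define \<beta> where "\<beta> = phase (\<Sum>k<n. of_real (r k) * u k)"
  define H where "H = householder n (\<lambda>k. of_real (r k) * \<beta> - u k)"
  define P where "P = householder n (\<lambda>k. of_real ((if k = 0 then 1 else 0) - r k))"
  have "unitary n (mat_mult n H P)" unfolding H_def P_def by (intro unitary_mult unitary_householder)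
  moreover have "mat_mult n H P k 0 = u k * cnj \<beta>" if "k < n" for k
    unfolding H_def P_def \<beta>_def by (rule householder_pair_first_column[OF n r u that])
  moreover have "mat_regular n \<Omega> (\<lambda>q. mat_mult n (mat_adj (mat_mult n H P)) (F q))"
  proof -
    have "(\<Sum>k<n. cnj (of_real (r k) * \<beta> - u k) * F q k l) =
        cnj \<beta> * (\<Sum>k<n. of_real (r k) * F q k l) - (\<Sum>k<n. cnj (u k) * F q k l)" for q l
      by (simp add: cnj_mult left_diff_distrib sum_subtractf sum_distrib_left mult.assoc)
    then have "(\<Sum>k<n. cnj (of_real (r k) * \<beta> - u k) * F q k l) = cnj \<beta> * R l - C l"
      if "q \<in> \<Omega>" "l < n" for q l
      using r_const[OF that] u_const[OF that] by simp
    then have "mat_regular n \<Omega> (\<lambda>q. mat_mult n H (F q))"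
      unfolding H_def by (rule householder_mult_regular[OF sd F])
    moreover have "mat_adj (mat_mult n H P) = mat_mult n P H"
      by (simp add: mat_adj_mult H_def P_def householder_adj)
    ultimately show ?thesis
      unfolding P_def by (simp only: mat_mult_assoc householder_of_real mat_regular_of_real_mult)
  qed
  ultimately show ?thesis using that phase_norm[of "\<Sum>k<n. of_real (r k) * u k"] by (simp add: \<beta>_def)
qed

lemma cnj_coord_row_const:
  assumes sd: "slice_domain \<Omega>" and sym: "symmetric_set \<Omega>" and I: "I \<in> unit_sphere"
    and F: "mat_regular n \<Omega> F" and l: "l < n"
    and u_const: "\<And>q. q \<in> \<Omega> \<Longrightarrow> (\<Sum>k<n. cnj (u k) * F q k l) = C"
    and q: "q \<in> \<Omega>" "q' \<in> \<Omega>" and m: "m < 4"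
  shows "(\<Sum>k<n. of_real (cnj_coord m (u k)) * F q k l) = (\<Sum>k<n. of_real (cnj_coord m (u k)) * F q' k l)"
proof (rule regular_components_const[OF _ I sym sd _ q m])
  show "regular \<Omega> (\<lambda>q. \<Sum>k<n. of_real (cnj_coord m (u k)) * F q k l)" for m
    using F l by (intro regular_sum regular_of_real_mult) (simp add: mat_regular_def)
  fix q assume "q \<in> \<Omega>"
  have "(\<Sum>m<4. quat_basis m * (\<Sum>k<n. of_real (cnj_coord m (u k)) * F q k l))
      = (\<Sum>k<n. (\<Sum>m<4. quat_basis m * of_real (cnj_coord m (u k))) * F q k l)"
    by (simp add: sum_distrib_left sum_distrib_right mult.assoc sum.swap[of _ "{..<4}"])
  also have "\<dots> = C" by (simp add: sum_cnj_coord u_const[OF \<open>q \<in> \<Omega>\<close>])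
  finally show "(\<Sum>m<4. quat_basis m * (\<Sum>k<n. of_real (cnj_coord m (u k)) * F q k l)) = C" .
qed

lemma vec_norm_cnj_coord_pos:
  assumes "vec_norm n u = 1"
  obtains m where "m < 4" "vec_norm n (\<lambda>k. of_real (cnj_coord m (u k)) :: quat) > 0"
proof -
  obtain k where k: "k < n" "u k \<noteq> 0"
    using assms by (metis vec_norm_eq_0 zero_neq_one)
  have "\<exists>m<4. cnj_coord m (u k) \<noteq> 0"
  proof (rule ccontr)
    assume "\<not> ?thesis"
    then have "cnj (u k) = 0" by (simp flip: sum_cnj_coord[of "u k"])
    with k show False by simp
  qed
  then obtain m where m: "m < 4" "cnj_coord m (u k) \<noteq> 0" by blast
  have "0 < norm (of_real (cnj_coord m (u k)) :: quat)" using m by simp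
  also have "\<dots> \<le> vec_norm n (\<lambda>k. of_real (cnj_coord m (u k)) :: quat)"
    by (rule norm_le_vec_norm[OF k(1), of "\<lambda>k. of_real (cnj_coord m (u k))"])
  finally show ?thesis using m that by blast
qed

lemma real_unit_row_const:
  assumes sd: "slice_domain \<Omega>" and sym: "symmetric_set \<Omega>" and I: "I \<in> unit_sphere"
    and F: "mat_regular n \<Omega> F" and u: "vec_norm n u = 1"
    and u_const: "\<And>q l. q \<in> \<Omega> \<Longrightarrow> l < n \<Longrightarrow> (\<Sum>k<n. cnj (u k) * F q k l) = C l"
    and q0: "q0 \<in> \<Omega>"
  obtains r where "vec_norm n (\<lambda>k. of_real (r k)) = 1"
    "\<And>q l. q \<in> \<Omega> \<Longrightarrow> l < n \<Longrightarrow> (\<Sum>k<n. of_real (r k) * F q k l) = (\<Sum>k<n. of_real (r k) * F q0 k l)"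
proof -
  obtain m where m: "m < 4" and pos: "vec_norm n (\<lambda>k. of_real (cnj_coord m (u k)) :: quat) > 0"
    using vec_norm_cnj_coord_pos[OF u] .
  define L where "L = vec_norm n (\<lambda>k. of_real (cnj_coord m (u k)) :: quat)"
  define r where "r k = cnj_coord m (u k) / L" for k
  have r_eq: "(\<lambda>k. of_real (r k) :: quat) = (\<lambda>k. scaleR (1 / L) (of_real (cnj_coord m (u k))))"
    by (simp add: r_def fun_eq_iff of_real_def)
  have "vec_norm n (\<lambda>k. of_real (r k) :: quat) = 1"
    unfolding r_eq vec_norm_scaleR using pos by (simp add: L_def)
  moreover have "(\<Sum>k<n. of_real (r k) * F q k l) = (\<Sum>k<n. of_real (r k) * F q0 k l)"
    if "q \<in> \<Omega>" "l < n" for q l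
  proof -
    have "(\<Sum>k<n. of_real (r k) * F q k l) = scaleR (1 / L) (\<Sum>k<n. of_real (cnj_coord m (u k)) * F q k l)"
      for q by (simp add: r_def scaleR_sum_right of_real_def)
    with cnj_coord_row_const[OF sd sym I F that(2) u_const[OF _ that(2)] that(1) q0 m] show ?thesis
      by simp
  qed
  ultimately show ?thesis using that by blast
qed

section \<open>Block decomposition\<close>

lemma unitary_id: "unitary n mat_id"
proof -
  have "mat_adj mat_id = mat_id" by (intro ext) (simp add: mat_adj_def mat_id_cnj)
  then show ?thesis unfolding unitary_def mat_eq_def by (simp add: mat_mult_id_left)
qed

lemma mat_eq_unitary_conj:
  assumes "unitary n U" "unitary n W"
  shows "mat_eq n A (mat_mult n (mat_mult n U (mat_mult n (mat_mult n (mat_adj U) A) W)) (mat_adj W))"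
proof -
  have "mat_mult n (mat_mult n U (mat_mult n (mat_mult n (mat_adj U) A) W)) (mat_adj W) =
      mat_mult n (mat_mult n (mat_mult n U (mat_adj U)) A) (mat_mult n W (mat_adj W))"
    by (simp add: mat_mult_assoc)
  moreover have "mat_eq n (mat_mult n (mat_mult n (mat_mult n U (mat_adj U)) A) (mat_mult n W (mat_adj W)))
      (mat_mult n (mat_mult n mat_id A) mat_id)"
    using assms unfolding unitary_def by (intro mat_eq_mult mat_eq_refl) auto
  moreover have "mat_eq n (mat_mult n (mat_mult n mat_id A) mat_id) A"
    by (simp add: mat_eq_def mat_mult_id_right mat_mult_id_left)
  ultimately show ?thesis by (metis mat_eq_sym mat_eq_trans)
qed

lemma block_diag_mat_eq:
  assumes "\<And>j. j < n \<Longrightarrow> M 0 j = scaleR s (mat_id 0 j)" "\<And>i. i < n \<Longrightarrow> M i 0 = scaleR s (mat_id i 0)"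
  shows "mat_eq n (block_diag (qreal s) (\<lambda>i j. M (Suc i) (Suc j))) M"
  unfolding mat_eq_def
proof (intro allI impI)
  fix i j assume ij: "i < n" "j < n"
  show "block_diag (qreal s) (\<lambda>i j. M (Suc i) (Suc j)) i j = M i j"
  proof (cases "i = 0")
    case True
    then show ?thesis using assms(1)[OF ij(2)]
      by (simp add: block_diag_def mat_id_def qreal_eq_of_real scaleR_conv_of_real)
  next
    case False
    then show ?thesis using assms(2)[OF ij(1)]
      by (cases "j = 0") (simp_all add: block_diag_def mat_id_def)
  qed
qed

lemma unitary_block_decomposition:
  assumes n: "1 \<le> n" and U: "unitary n U" and W: "unitary n W"
    and Av: "\<And>i. i < n \<Longrightarrow> mat_vec n A (\<lambda>k. W k 0) i = scaleR s (U i 0)"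
    and uA: "\<And>j. j < n \<Longrightarrow> (\<Sum>k<n. cnj (U k 0) * A k j) = scaleR s (cnj (W j 0))"
  defines "M \<equiv> mat_mult n (mat_mult n (mat_adj U) A) W"
  shows "mat_eq n A (mat_mult n (mat_mult n U (block_diag (qreal s) (\<lambda>i j. M (Suc i) (Suc j)))) (mat_adj W))"
proof -
  have n0: "0 < n" using n by simp
  have "M 0 j = scaleR s (mat_id 0 j)" if "j < n" for j
  proof -
    have "M 0 j = (\<Sum>l<n. scaleR s (cnj (W l 0)) * W l j)"
      unfolding M_def mat_mult_def[of n _ W] by (rule sum.cong) (simp_all add: uA mat_mult_def mat_adj_def)
    also have "\<dots> = scaleR s (mat_mult n (mat_adj W) W 0 j)"
      by (simp add: mat_mult_def mat_adj_def scaleR_sum_right)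
    finally show ?thesis using W n0 that by (simp add: unitary_def mat_eq_def)
  qed
  moreover have "M i 0 = scaleR s (mat_id i 0)" if "i < n" for i
  proof -
    have "M i 0 = mat_vec n (mat_mult n (mat_adj U) A) (\<lambda>k. W k 0) i"
      by (simp add: M_def mat_mult_def mat_vec_def)
    also have "\<dots> = mat_vec n (mat_adj U) (mat_vec n A (\<lambda>k. W k 0)) i"
      by (simp only: mat_vec_mult)
    also have "\<dots> = (\<Sum>k<n. mat_adj U i k * scaleR s (U k 0))"
      unfolding mat_vec_def[of n "mat_adj U"] by (rule sum.cong) (simp_all add: Av)
    also have "\<dots> = scaleR s (mat_mult n (mat_adj U) U i 0)"
      by (simp add: mat_mult_def scaleR_sum_right)
    finally show ?thesis using U n0 that by (simp add: unitary_def mat_eq_def)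
  qed
  ultimately have "mat_eq n (block_diag (qreal s) (\<lambda>i j. M (Suc i) (Suc j))) M"
    by (rule block_diag_mat_eq)
  then have "mat_eq n (mat_mult n (mat_mult n U (block_diag (qreal s) (\<lambda>i j. M (Suc i) (Suc j)))) (mat_adj W))
      (mat_mult n (mat_mult n U M) (mat_adj W))"
    by (intro mat_eq_mult mat_eq_refl)
  with mat_eq_unitary_conj[OF U W, of A] show ?thesis
    unfolding M_def by (metis mat_eq_sym mat_eq_trans)
qed

lemma singular_pair_block_decomposition:
  assumes n: "1 \<le> n" and sd: "slice_domain \<Omega>" and sym: "symmetric_set \<Omega>" and I: "I \<in> unit_sphere"
    and F: "mat_regular n \<Omega> F" and q0: "q0 \<in> \<Omega>"
    and u: "vec_norm n u = 1" and v: "vec_norm n v = 1"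
    and Fv: "\<And>q i. q \<in> \<Omega> \<Longrightarrow> i < n \<Longrightarrow> mat_vec n (F q) v i = scaleR s (u i)"
    and uF: "\<And>q j. q \<in> \<Omega> \<Longrightarrow> j < n \<Longrightarrow> (\<Sum>k<n. cnj (u k) * F q k j) = scaleR s (cnj (v j))"
  shows "\<exists>U V G. unitary n U \<and> unitary n V \<and> mat_regular (n - 1) \<Omega> G \<and>
           (\<forall>q\<in>\<Omega>. mat_eq n (F q) (mat_mult n (mat_mult n U (block_diag (qreal s) (G q))) V))"
proof -
  obtain r where r: "vec_norm n (\<lambda>k. of_real (r k)) = 1"
    "\<And>q l. q \<in> \<Omega> \<Longrightarrow> l < n \<Longrightarrow> (\<Sum>k<n. of_real (r k) * F q k l) = (\<Sum>k<n. of_real (r k) * F q0 k l)"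
    using real_unit_row_const[OF sd sym I F u uF q0] by blast
  obtain U \<beta> where U: "unitary n U" "norm \<beta> = 1" "\<And>k. k < n \<Longrightarrow> U k 0 = u k * cnj \<beta>"
    "mat_regular n \<Omega> (\<lambda>q. mat_mult n (mat_adj U) (F q))"
    using unitary_first_column_regular[OF n sd F r(1) u r(2) uF] by blast
  have "vec_norm n (\<lambda>k. v k * cnj \<beta>) = 1"
    using v U(2) by (simp add: vec_norm_def norm_mult)
  then obtain W where W: "unitary n W" "\<forall>k<n. W k 0 = v k * cnj \<beta>"
    using unitary_first_column[OF n] by blast
  define M where "M q = mat_mult n (mat_mult n (mat_adj U) (F q)) W" for q
  have "mat_eq n (F q) (mat_mult n (mat_mult n U (block_diag (qreal s) (\<lambda>i j. M q (Suc i) (Suc j)))) (mat_adj W))"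
    if q: "q \<in> \<Omega>" for q
    unfolding M_def
  proof (rule unitary_block_decomposition[OF n U(1) W(1)])
    fix i assume "i < n"
    have "mat_vec n (F q) (\<lambda>k. W k 0) i = mat_vec n (F q) v i * cnj \<beta>"
      using W(2) by (simp add: mat_vec_def sum_distrib_right mult.assoc)
    then show "mat_vec n (F q) (\<lambda>k. W k 0) i = scaleR s (U i 0)"
      using Fv[OF q \<open>i < n\<close>] U(3)[OF \<open>i < n\<close>] by simp
  next
    fix j assume "j < n"
    have "(\<Sum>k<n. cnj (U k 0) * F q k j) = \<beta> * (\<Sum>k<n. cnj (u k) * F q k j)"
      by (simp add: U(3) cnj_mult sum_distrib_left mult.assoc)
    then show "(\<Sum>k<n. cnj (U k 0) * F q k j) = scaleR s (cnj (W j 0))"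
      using uF[OF q \<open>j < n\<close>] W(2) \<open>j < n\<close> by (simp add: cnj_mult)
  qed
  moreover have "mat_regular (n - 1) \<Omega> (\<lambda>q i j. M q (Suc i) (Suc j))"
    using U(4) unfolding mat_regular_def M_def mat_mult_def[of n _ W]
    by (intro allI impI regular_sum regular_mult_right) simp
  ultimately show ?thesis using U(1) unitary_adj[OF W(1)] by blast
qed

lemma max_norm_singular_pair:
  assumes sd: "slice_domain \<Omega>" and I: "I \<in> unit_sphere" and q0: "q0 \<in> slice \<Omega> I"
    and F: "mat_regular n \<Omega> F" and le: "\<forall>q\<in>\<Omega>. op_norm n (F q) \<le> op_norm n (F q0)"
    and pos: "op_norm n (F q0) > 0"
  defines "s \<equiv> op_norm n (F q0)"
  obtains u v where "vec_norm n u = 1" "vec_norm n v = 1"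
    "\<And>q i. q \<in> \<Omega> \<Longrightarrow> i < n \<Longrightarrow> mat_vec n (F q) v i = scaleR s (u i)"
    "\<And>q j. q \<in> \<Omega> \<Longrightarrow> j < n \<Longrightarrow> (\<Sum>k<n. cnj (u k) * F q k j) = scaleR s (cnj (v j))"
proof -
  obtain v where v: "vec_norm n v \<le> 1" "vec_norm n (mat_vec n (F q0) v) = s"
    using op_norm_attained[of n "F q0"] by (auto simp: s_def)
  have "s \<le> s * vec_norm n v" using vec_norm_mat_vec_le[of n "F q0" v] v(2) by (simp add: s_def)
  with v(1) pos have v1: "vec_norm n v = 1" by (simp add: s_def)
  define u where "u k = scaleR (1 / s) (mat_vec n (F q0) v k)" for k
  have u1: "vec_norm n u = 1"
    using v(2) pos by (simp add: u_def[abs_def] vec_norm_scaleR s_def)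
  have Fv: "mat_vec n (F q) v i = scaleR s (u i)" if q: "q \<in> \<Omega>" and i: "i < n" for q i
  proof -
    have "mat_vec n (F q) v i = mat_vec n (F q0) v i"
    proof (rule regular_vector_max_norm_const[OF sd I q0 _ _ q i, where g = "\<lambda>k q. mat_vec n (F q) v k"])
      show "regular \<Omega> (\<lambda>q. mat_vec n (F q) v k)" if "k < n" for k
        unfolding mat_vec_def using F that by (intro regular_sum regular_mult_right) (simp add: mat_regular_def)
      show "vec_norm n (\<lambda>k. mat_vec n (F q) v k) \<le> vec_norm n (\<lambda>k. mat_vec n (F q0) v k)"
        if "q \<in> \<Omega>" for q
      proof -
        have "vec_norm n (mat_vec n (F q) v) \<le> op_norm n (F q)"
          using vec_norm_mat_vec_le[of n "F q" v] v1 by simp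
        also have "\<dots> \<le> s" using le that by (simp add: s_def)
        finally show ?thesis using v(2) by simp
      qed
    qed
    then show ?thesis using pos by (simp add: u_def s_def)
  qed
  have "(\<Sum>k<n. cnj (u k) * F q k j) = scaleR s (cnj (v j))" if "q \<in> \<Omega>" "j < n" for q j
    using left_singular_vector[OF u1 v1 _ _ Fv[OF that(1)] that(2)] le that(1) pos
    by (simp add: s_def)
  with u1 v1 Fv show ?thesis by (rule that)
qed

theorem theorem3p8:
  fixes n :: nat and \<Omega> :: "quat set" and F :: "quat \<Rightarrow> nat \<Rightarrow> nat \<Rightarrow> quat"
    and I q0 :: quat
  assumes "n \<ge> 1"
    and "slice_domain \<Omega>" and "symmetric_set \<Omega>"
    and "mat_regular n \<Omega> F"
    and "I \<in> unit_sphere" and "q0 \<in> slice \<Omega> I"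
    and "\<forall>q\<in>\<Omega>. op_norm n (F q) \<le> op_norm n (F q0)"
  shows "\<exists>U V G. unitary n U \<and> unitary n V \<and> mat_regular (n - 1) \<Omega> G \<and>
           (\<forall>q\<in>\<Omega>. mat_eq n (F q)
              (mat_mult n (mat_mult n U (block_diag (qreal (op_norm n (F q0))) (G q))) V))"
proof (cases "op_norm n (F q0) = 0")
  case True
  then have "F q i j = 0" if "q \<in> \<Omega>" "i < n" "j < n" for q i j
    using op_norm_le_0_entry[of n "F q" i j] assms(7) that by simp
  then have "\<forall>q\<in>\<Omega>. mat_eq n (F q) (mat_mult n (mat_mult n mat_id (block_diag (qreal 0) (\<lambda>i j. 0))) mat_id)"
    by (simp add: mat_eq_def mat_mult_id_right mat_mult_id_left block_diag_def qreal_def quat_eq_iff)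
  moreover have "mat_regular (n - 1) \<Omega> (\<lambda>q i j. 0)"
    by (simp add: mat_regular_def regular_const)
  ultimately show ?thesis
    unfolding True by (intro exI[of _ mat_id] exI[of _ "\<lambda>q i j. 0"] conjI unitary_id)
next
  case False
  have q0: "q0 \<in> \<Omega>" using assms(6) by (simp add: slice_def)
  have pos: "op_norm n (F q0) > 0" using False op_norm_nonneg[of n "F q0"] by simp
  show ?thesis
    by (rule max_norm_singular_pair[OF assms(2,5,6,4,7) pos])
      (rule singular_pair_block_decomposition[OF assms(1-3,5,4) q0])
qed

end
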